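(* Let $G$ be a finite non-cyclic $p$-group having no subgroup isomorphic to a generalized quaternion group $Q_{2^n}$. Suppose that either (i) the derived subgroup $G'$ is non-cyclic, or (ii) there exists $g\in G$ with $o(g)>p$ and $\langle g\rangle\cap G'=\{e\}$. Then $E(\mathcal{P}_e(G))\subsetneq E(\Delta_D(G))$.
   Context: The enhanced power graph $\mathcal{P}_e(G)$ of a group $G$ has vertex set $G$, with distinct $x,y$ adjacent iff $\langle x,y\rangle$ is cyclic; $E(\cdot)$ denotes the edge set. For a finite group $G$ with Schur multiplier $M(G)$, a Schur cover is a group $\tilde G$ with central extension $\{e\}\to M(G)\xrightarrow{\iota}\tilde G\xrightarrow{\pi}G\to\{e\}$, $\iota(M(G))\subseteq Z(\tilde G)\cap[\tilde G,\tilde G]$, of maximal order. The deep commuting graph $\Delta_D(G)$ has vertex set $G$, distinct vertices adjacent iff their preimages under $\pi$ commute in $\tilde G$. $Q_{2^n}=\langle a,b\mid a^{2^{n-1}}=e,\ b^2=a^{2^{n-2}},\ ab=ba^{-1}\rangle$. *)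

theory Defs
  imports "HOL-Algebra.Algebra"
begin

definition center_of :: "('a, 'b) monoid_scheme \<Rightarrow> 'a set" where
  "center_of G = {z \<in> carrier G. \<forall>x \<in> carrier G. z \<otimes>\<^bsub>G\<^esub> x = x \<otimes>\<^bsub>G\<^esub> z}"

definition p_group :: "nat \<Rightarrow> ('a, 'b) monoid_scheme \<Rightarrow> bool" where
  "p_group p G \<longleftrightarrow> group G \<and> finite (carrier G) \<and> Factorial_Ring.prime p \<and> (\<exists>k. order G = p ^ k)"

text \<open>Concrete model of the generalized quaternion group Q_{2^n} (n >= 3):
  the pair (i,j) stands for a^i b^j, with 0 <= i < 2^(n-1), j in {0,1}.\<close>
definition quaternion_group :: "nat \<Rightarrow> (nat \<times> nat) monoid" where
  "quaternion_group n =
    (let m = 2 ^ (n - 1) in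
     \<lparr> carrier = {(i, j). i < m \<and> j < 2},
       monoid.mult = (\<lambda>(i, j) (k, l).
          if j = 0 then ((i + k) mod m, l)
          else if l = 0 then ((i + m - k) mod m, 1)
          else ((i + m - k + 2 ^ (n - 2)) mod m, 0)),
       one = (0, 0) \<rparr>)"

definition has_gen_quaternion_subgroup :: "('a, 'b) monoid_scheme \<Rightarrow> bool" where
  "has_gen_quaternion_subgroup G \<longleftrightarrow>
     (\<exists>H n. n \<ge> 3 \<and> subgroup H G \<and> (G\<lparr>carrier := H\<rparr>) \<cong> quaternion_group n)"

definition stem_extension :: "('c, 'd) monoid_scheme \<Rightarrow> ('a, 'b) monoid_scheme \<Rightarrow> ('c \<Rightarrow> 'a) \<Rightarrow> bool" where
  "stem_extension Gt G \<pi> \<longleftrightarrow> group Gt \<and> group G \<and> \<pi> \<in> epi Gt G \<and>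
     kernel Gt G \<pi> \<subseteq> center_of Gt \<inter> derived Gt (carrier Gt)"

text \<open>Schur cover: a stem extension of maximal order (maximality tested against all
  stem extensions carried by the type nat, which represents every finite group up to
  isomorphism).\<close>
definition schur_cover :: "('c, 'd) monoid_scheme \<Rightarrow> ('a, 'b) monoid_scheme \<Rightarrow> ('c \<Rightarrow> 'a) \<Rightarrow> bool" where
  "schur_cover Gt G \<pi> \<longleftrightarrow> stem_extension Gt G \<pi> \<and> finite (carrier Gt) \<and>
     (\<forall>(K :: nat monoid) \<sigma>. stem_extension K G \<sigma> \<longrightarrow> order K \<le> order Gt)"

definition enhanced_power_edges :: "('a, 'b) monoid_scheme \<Rightarrow> 'a set set" where
  "enhanced_power_edges G = {{x, y} | x y. x \<in> carrier G \<and> y \<in> carrier G \<and> x \<noteq> y \<and>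
      cyclic_group (subgroup_generated G {x, y})}"

definition deep_commuting_edges ::
  "('c, 'd) monoid_scheme \<Rightarrow> ('a, 'b) monoid_scheme \<Rightarrow> ('c \<Rightarrow> 'a) \<Rightarrow> 'a set set" where
  "deep_commuting_edges Gt G \<pi> = {{x, y} | x y. x \<in> carrier G \<and> y \<in> carrier G \<and> x \<noteq> y \<and>
      (\<forall>u \<in> carrier Gt. \<forall>v \<in> carrier Gt. \<pi> u = x \<longrightarrow> \<pi> v = y \<longrightarrow>
          u \<otimes>\<^bsub>Gt\<^esub> v = v \<otimes>\<^bsub>Gt\<^esub> u)}"

end

theory Submission
  imports Defs
begin

text \<open>
  Preimages under a central extension of elements generating a cyclic subgroup commute,
  so every edge of the enhanced power graph is an edge of the deep commuting graph.
  For strictness we exhibit a central \<open>x\<close> of order \<open>p\<close> and some \<open>y \<noteq> 1\<close> with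
  \<open>x \<notin> \<langle>y\<rangle>\<close> (so \<open>\<langle>x, y\<rangle>\<close> is not cyclic) such that \<open>y\<close> lies in \<open>G'\<close> or is a \<open>p\<close>-th power.
  If \<open>u\<close> lifts \<open>x\<close>, then \<open>w \<mapsto> [u, w]\<close> is a homomorphism into the centre of the cover
  which kills commutators and, as \<open>u\<^sup>p\<close> is central, also \<open>p\<close>-th powers; hence the lifts
  of \<open>x\<close> and \<open>y\<close> commute.

  The pair is found in \<open>G'\<close> (case (i)) or as \<open>y = g\<^sup>p\<close> (case (ii)), using that a normal
  subgroup of a \<open>p\<close>-group meets the centre.  Where no such pair exists, all elements of
  order \<open>p\<close> of a non-cyclic subgroup lie in one cyclic subgroup of order \<open>p\<close>.  A minimal
  non-cyclic subgroup of it then contains \<open>a\<close> of maximal order and \<open>b \<notin> \<langle>a\<rangle>\<close> normalizing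
  \<open>\<langle>a\<rangle>\<close> with \<open>b\<^sup>p \<in> \<langle>a\<^sup>p\<rangle>\<close>; minimality makes \<open>\<langle>a\<^sup>p, b\<rangle>\<close> cyclic, and computing
  \<open>(a\<^sup>k b)\<^sup>p\<close> forces \<open>p = 2\<close>, \<open>|a| = 4\<close> and the relations of \<open>Q\<^sub>8\<close>, contradicting the hypothesis.
\<close>

context group begin

lemma inv_cancel_left [simp]: "x \<in> carrier G \<Longrightarrow> y \<in> carrier G \<Longrightarrow> inv x \<otimes> (x \<otimes> y) = y"
  by (simp add: m_assoc[symmetric])

lemma inv_cancel_right [simp]: "x \<in> carrier G \<Longrightarrow> y \<in> carrier G \<Longrightarrow> x \<otimes> (inv x \<otimes> y) = y"
  by (simp add: m_assoc[symmetric])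

lemma finite_subgroupI:
  assumes fin: "finite (carrier G)" and S: "S \<subseteq> carrier G" and one: "\<one> \<in> S"
    and mult: "\<And>x y. x \<in> S \<Longrightarrow> y \<in> S \<Longrightarrow> x \<otimes> y \<in> S"
  shows "subgroup S G"
proof (rule subgroupI)
  fix x assume x: "x \<in> S"
  then have xc: "x \<in> carrier G" using S by blast
  have pow: "x [^] (n::nat) \<in> S" for n
    by (induction n) (auto intro: one mult x)
  have "x [^] Suc (ord x - 1) = \<one>"
    using ord_ge_1[OF fin xc] xc by simp
  then have "x [^] (ord x - 1) \<otimes> x = \<one>"
    using xc by simp
  then have "inv x = x [^] (ord x - 1)"
    using xc by (simp add: inv_equality)
  then show "inv x \<in> S" using pow by simp
qed (use S one mult in auto)

lemma subgroup_nat_pow_closed: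
  assumes "subgroup H G" "h \<in> H" shows "h [^] (n::nat) \<in> H"
  using subgroup_int_pow_closed[OF assms, of "int n"] by (simp add: int_pow_int)

lemma nat_pow_mem_generate:
  assumes "x \<in> carrier G" shows "x [^] (n::nat) \<in> generate G {x}"
  using assms by (intro subgroup_nat_pow_closed generate_is_subgroup generate.incl) auto

lemma conj_nat_pow:
  assumes "x \<in> carrier G" "y \<in> carrier G"
  shows "x \<otimes> y [^] (n::nat) \<otimes> inv x = (x \<otimes> y \<otimes> inv x) [^] n"
proof (induction n)
  case (Suc n)
  have "x \<otimes> y [^] Suc n \<otimes> inv x = (x \<otimes> y [^] n \<otimes> inv x) \<otimes> (x \<otimes> y \<otimes> inv x)"
    using assms by (simp add: m_assoc)
  then show ?case using Suc assms by simp
qed (use assms in simp)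

lemma nat_pow_mod_ord:
  assumes a: "a \<in> carrier G" shows "a [^] (n::nat) = a [^] (n mod ord a)"
proof -
  have "a [^] n = a [^] (ord a * (n div ord a)) \<otimes> a [^] (n mod ord a)"
    using a by (simp add: nat_pow_mult)
  also have "a [^] (ord a * (n div ord a)) = \<one>"
    using a by (simp add: nat_pow_pow[symmetric])
  finally show ?thesis using a by simp
qed

definition commutator :: "'a \<Rightarrow> 'a \<Rightarrow> 'a" where
  "commutator x y = x \<otimes> y \<otimes> inv x \<otimes> inv y"

lemma center_ofD: "z \<in> center_of G \<Longrightarrow> x \<in> carrier G \<Longrightarrow> z \<otimes> x = x \<otimes> z"
  unfolding center_of_def by blast

lemma center_of_closed: "z \<in> center_of G \<Longrightarrow> z \<in> carrier G"
  unfolding center_of_def by blast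

lemma commutator_closed [simp]: "x \<in> carrier G \<Longrightarrow> y \<in> carrier G \<Longrightarrow> commutator x y \<in> carrier G"
  by (simp add: commutator_def)

lemma commutator_eq_one_iff:
  "x \<in> carrier G \<Longrightarrow> y \<in> carrier G \<Longrightarrow> commutator x y = \<one> \<longleftrightarrow> x \<otimes> y = y \<otimes> x"
proof -
  assume xy: "x \<in> carrier G" "y \<in> carrier G"
  have "commutator x y \<otimes> (y \<otimes> x) = x \<otimes> y" using xy by (simp add: commutator_def m_assoc)
  then show ?thesis using xy by (metis commutator_closed l_one m_closed one_closed right_cancel)
qed

lemma commutator_central_left:
  assumes "z \<in> center_of G" "y \<in> carrier G" shows "commutator z y = \<one>"
  using assms unfolding center_of_def by (auto simp: commutator_eq_one_iff)

lemma conj_eq_commutator_mult: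
  "x \<in> carrier G \<Longrightarrow> y \<in> carrier G \<Longrightarrow> x \<otimes> y \<otimes> inv x = commutator x y \<otimes> y"
  unfolding commutator_def by (simp add: m_assoc)

lemma nat_pow_mem_generate_nat_pow:
  assumes x: "x \<in> carrier G" and d: "gcd (ord x) j dvd i"
  shows "x [^] (i::nat) \<in> generate G {x [^] (j::nat)}"
proof (cases "j = 0")
  case True
  then have "x [^] i = \<one>" using d x pow_eq_id by simp
  then show ?thesis by (simp add: generate.one)
next
  case False
  obtain u v where uv: "j * u = ord x * v + gcd j (ord x)" using bezout_nat[OF False] by blast
  obtain q where q: "i = gcd (ord x) j * q" using d by blast
  have "x [^] (j * u) = x [^] (ord x * v) \<otimes> x [^] (gcd j (ord x))"
    using uv x by (simp add: nat_pow_mult)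
  also have "x [^] (ord x * v) = \<one>" using x by (simp add: nat_pow_pow[symmetric])
  finally have g: "x [^] gcd (ord x) j = x [^] (j * u)" using x by (simp add: gcd.commute)
  have "x [^] i = (x [^] gcd (ord x) j) [^] q" using q x by (simp add: nat_pow_pow)
  also have "\<dots> = (x [^] j) [^] (u * q)" using g x by (simp add: nat_pow_pow mult.assoc)
  finally show ?thesis using x nat_pow_mem_generate[of "x [^] j"] by simp
qed

lemma ord_prime_mem_generate:
  assumes c: "c \<in> carrier G" and oc: "ord c = p ^ m" and p: "Factorial_Ring.prime p"
    and x: "x \<in> generate G {c}" and y: "y \<in> generate G {c}" and ox: "ord x = p" and y1: "y \<noteq> \<one>"
  shows "x \<in> generate G {y}"
proof -
  have p1: "p > 1" using p prime_gt_1_nat by blast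
  have o0: "ord c \<noteq> 0" using oc p1 by simp
  obtain i where i: "x = c [^] (i::nat)" using x generate_pow_nat[OF c o0] by blast
  obtain j where j: "y = c [^] (j::nat)" using y generate_pow_nat[OF c o0] by blast
  obtain f where f: "gcd (p ^ m) i = p ^ f" "f \<le> m"
    using divides_primepow_nat[OF p] by (metis gcd_dvd1)
  obtain e where e: "gcd (p ^ m) j = p ^ e" "e \<le> m"
    using divides_primepow_nat[OF p] by (metis gcd_dvd1)
  have "i \<noteq> 0" using i ox p1 by (intro notI) simp
  then have "ord (c [^] i) = ord c div gcd (ord c) i" using ord_pow_gen[OF c, of i] by presburger
  then have "p ^ m div p ^ f = p" using i ox oc f by metis
  then have "p ^ (m - f) = p ^ 1" using f p1 by (simp add: power_diff)
  then have mf: "m - f = 1" using p1 power_inject_exp by blast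
  have "\<not> ord c dvd j" using j y1 pow_eq_id[OF c] by simp
  then have "e \<noteq> m" using e oc by (metis gcd_dvd2)
  then have "gcd (p ^ m) j dvd gcd (p ^ m) i" using e f mf by (simp add: le_imp_power_dvd)
  then have "gcd (ord c) j dvd i" using oc by (metis dvd_trans gcd_dvd2)
  then show ?thesis using nat_pow_mem_generate_nat_pow[OF c] i j by simp
qed

lemma ord_eq_prime:
  assumes p: "Factorial_Ring.prime p" and w: "w \<in> carrier G" and "w [^] p = \<one>" "w \<noteq> \<one>"
  shows "ord w = p"
proof -
  have "ord w dvd p" using pow_eq_id[OF w] assms(3) by simp
  moreover have "ord w \<noteq> 1" using ord_eq_1[OF w] assms(4) by simp
  ultimately show ?thesis using p by (auto simp: prime_nat_iff)
qed

lemma cyclic_group_subgroup_generated_iff: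
  assumes S: "S \<subseteq> carrier G"
  shows "cyclic_group (subgroup_generated G S) \<longleftrightarrow> (\<exists>c \<in> carrier G. generate G S = generate G {c})"
proof -
  let ?K = "subgroup_generated G S"
  interpret K: group ?K by simp
  have cK: "carrier ?K = generate G S" using S by (simp add: carrier_subgroup_generated Int_absorb1)
  have pw: "range (\<lambda>n::int. c [^]\<^bsub>?K\<^esub> n) = generate G {c}" if "c \<in> carrier ?K" "c \<in> carrier G" for c
    using int_pow_subgroup_generated[OF that(1)] generate_pow[OF that(2)] by auto
  show ?thesis
  proof
    assume "cyclic_group ?K"
    then obtain c where c: "c \<in> carrier ?K" "carrier ?K = range (\<lambda>n::int. c [^]\<^bsub>?K\<^esub> n)"
      using K.cyclic_group by blast
    have "c \<in> carrier G" using c(1) cK generate_incl[OF S] by blast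
    then show "\<exists>c \<in> carrier G. generate G S = generate G {c}" using c pw cK by auto
  next
    assume "\<exists>c \<in> carrier G. generate G S = generate G {c}"
    then obtain c where c: "c \<in> carrier G" "generate G S = generate G {c}" by blast
    have "c \<in> carrier ?K" using c cK generate.incl[of c "{c}" G] by simp
    then show "cyclic_group ?K" using K.cyclic_group pw[OF _ c(1)] c(2) cK by auto
  qed
qed

lemma cyclic_group_iff_generate:
  "cyclic_group G \<longleftrightarrow> (\<exists>c \<in> carrier G. carrier G = generate G {c})"
proof -
  have "generate G {c} = range (\<lambda>n::int. c [^] n)" if "c \<in> carrier G" for c
    using generate_pow[OF that] by auto
  then show ?thesis by (simp add: cyclic_group cong: bex_cong)
qed

lemma nat_pow_mult_assoc:
  "x \<in> carrier G \<Longrightarrow> y \<in> carrier G \<Longrightarrow> x [^] (m::nat) \<otimes> (x [^] (n::nat) \<otimes> y) = x [^] (m + n) \<otimes> y"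
  by (simp add: m_assoc[symmetric] nat_pow_mult)

lemma commute_nat_pow:
  assumes "x \<in> carrier G" "y \<in> carrier G" "x \<otimes> y = y \<otimes> x"
  shows "x [^] (i::nat) \<otimes> y [^] (j::nat) = y [^] j \<otimes> x [^] i"
proof -
  have "y \<otimes> x [^] i = x [^] i \<otimes> y" using group_commutes_pow assms by simp
  then show ?thesis using group_commutes_pow[of y "x [^] i" j] assms by simp
qed

lemma cyclic_pow_prime_eq_one:
  assumes a: "a \<in> carrier G" and oa: "ord a = p ^ Suc m" and p: "Factorial_Ring.prime p"
    and w: "w \<in> generate G {a}" and wp: "w [^] p = \<one>"
  shows "\<exists>i::nat. w = (a [^] (p ^ m)) [^] i"
proof -
  have p0: "p > 0" using p prime_gt_0_nat by blast
  obtain i where i: "w = a [^] (i::nat)" using w generate_pow_nat[OF a] oa p0 by auto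
  have "a [^] (i * p) = \<one>" using wp i a by (simp add: nat_pow_pow)
  then have "p ^ Suc m dvd i * p" using pow_eq_id[OF a] oa by simp
  then obtain q where "i = p ^ m * q" using p0 by (auto simp: mult.commute)
  then have "w = (a [^] (p ^ m)) [^] q" using i a by (simp add: nat_pow_pow)
  then show ?thesis by blast
qed

lemma nat_pow_swap_of_central_commutator:
  assumes a: "a \<in> carrier G" and b: "b \<in> carrier G" and d: "d \<in> carrier G"
    and ba: "b \<otimes> a = d \<otimes> a \<otimes> b" and da: "d \<otimes> a = a \<otimes> d" and db: "d \<otimes> b = b \<otimes> d"
  shows "b [^] (j::nat) \<otimes> a [^] (l::nat) = d [^] (l * j) \<otimes> a [^] l \<otimes> b [^] j"
proof -
  have dak: "d [^] (i::nat) \<otimes> a [^] (l::nat) = a [^] l \<otimes> d [^] i" for i l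
    using commute_nat_pow[OF d a da] .
  have b1: "b \<otimes> a [^] (l::nat) = d [^] l \<otimes> a [^] l \<otimes> b" for l
  proof (induction l)
    case (Suc l)
    have "b \<otimes> a [^] Suc l = (b \<otimes> a [^] l) \<otimes> a" using a b by (simp add: m_assoc)
    also have "\<dots> = d [^] l \<otimes> a [^] l \<otimes> (b \<otimes> a)" using Suc a b d by (simp add: m_assoc)
    also have "\<dots> = d [^] l \<otimes> (a [^] l \<otimes> d) \<otimes> a \<otimes> b" using ba a b d by (simp add: m_assoc)
    also have "a [^] l \<otimes> d = d \<otimes> a [^] l" using dak[of 1 l] d a by simp
    finally show ?case using a b d by (simp add: m_assoc)
  qed (use b in simp)
  show ?thesis
  proof (induction j)
    case (Suc j)
    have "b [^] Suc j \<otimes> a [^] l = (b [^] j \<otimes> d [^] l) \<otimes> a [^] l \<otimes> b"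
      using b1 a b d by (simp add: m_assoc nat_pow_Suc2)
    also have "b [^] j \<otimes> d [^] l = d [^] l \<otimes> b [^] j" using commute_nat_pow[OF d b db] by simp
    also have "d [^] l \<otimes> b [^] j \<otimes> a [^] l \<otimes> b = d [^] l \<otimes> (b [^] j \<otimes> a [^] l) \<otimes> b"
      using a b d by (simp add: m_assoc)
    finally show ?case using Suc a b d by (simp add: m_assoc nat_pow_mult_assoc add.commute)
  qed (use a in simp)
qed

lemma nat_pow_mult_of_central_commutator:
  assumes a: "a \<in> carrier G" and b: "b \<in> carrier G" and d: "d \<in> carrier G"
    and ba: "b \<otimes> a = d \<otimes> a \<otimes> b" and da: "d \<otimes> a = a \<otimes> d" and db: "d \<otimes> b = b \<otimes> d"
  shows "(a [^] (k::nat) \<otimes> b) [^] (j::nat) = d [^] (k * (j * (j - 1) div 2)) \<otimes> a [^] (k * j) \<otimes> b [^] j"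
proof (induction j)
  case (Suc j)
  have T: "k * (Suc j * (Suc j - 1) div 2) = k * (j * (j - 1) div 2) + k * j"
  proof -
    have "Suc j * (Suc j - 1) div 2 = j * (j - 1) div 2 + j" by (cases j) (auto simp: algebra_simps)
    then show ?thesis by (simp add: algebra_simps)
  qed
  have "(a [^] k \<otimes> b) [^] Suc j = d [^] (k * (j * (j - 1) div 2)) \<otimes> a [^] (k * j) \<otimes> (b [^] j \<otimes> a [^] k) \<otimes> b"
    using Suc a b d by (simp add: m_assoc)
  also have "\<dots> = d [^] (k * (j * (j - 1) div 2)) \<otimes> (a [^] (k * j) \<otimes> d [^] (k * j)) \<otimes> a [^] k \<otimes> b [^] j \<otimes> b"
    using nat_pow_swap_of_central_commutator[OF assms, of j k] a b d by (simp add: m_assoc mult.commute)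
  also have "a [^] (k * j) \<otimes> d [^] (k * j) = d [^] (k * j) \<otimes> a [^] (k * j)"
    using commute_nat_pow[OF d a da] by simp
  also have "d [^] (k * (j * (j - 1) div 2)) \<otimes> (d [^] (k * j) \<otimes> a [^] (k * j)) \<otimes> a [^] k \<otimes> b [^] j \<otimes> b
      = d [^] (k * (j * (j - 1) div 2) + k * j) \<otimes> a [^] (k * j + k) \<otimes> b [^] Suc j"
    using a b d by (simp add: m_assoc nat_pow_mult nat_pow_mult_assoc)
  finally show ?case using T by (simp add: algebra_simps)
qed (use b in simp)

lemma nat_pow_conj_closed:
  assumes S: "S \<subseteq> carrier G" and x: "x \<in> carrier G"
    and conj: "\<And>s. s \<in> S \<Longrightarrow> x \<otimes> s \<otimes> inv x \<in> S" and s: "s \<in> S"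
  shows "x [^] (n::nat) \<otimes> s \<otimes> inv (x [^] n) \<in> S"
  using s
proof (induction n arbitrary: s)
  case (Suc n)
  have "x [^] Suc n \<otimes> s \<otimes> inv (x [^] Suc n) = x [^] n \<otimes> (x \<otimes> s \<otimes> inv x) \<otimes> inv (x [^] n)"
    using x Suc.prems S by (auto simp: m_assoc inv_mult_group nat_pow_Suc2)
  then show ?case using Suc.IH[OF conj[OF Suc.prems]] by simp
qed (use S in auto)

lemma subgroup_mult_nat_pows:
  fixes p :: nat
  assumes fin: "finite (carrier G)" and A: "subgroup A G" and b: "b \<in> carrier G"
    and norm: "\<And>g. g \<in> A \<Longrightarrow> b \<otimes> g \<otimes> inv b \<in> A" and bp: "b [^] p \<in> A" and p: "p > 0"
  shows "subgroup ((\<lambda>(g, j). g \<otimes> b [^] j) ` (A \<times> {..<p})) G"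
proof -
  interpret A: subgroup A G by (rule A)
  define T where "T = (\<lambda>(g, j). g \<otimes> b [^] j) ` (A \<times> {..<p})"
  have T: "g \<otimes> b [^] j \<in> T" if "g \<in> A" "j < p" for g j
    unfolding T_def using that by (intro image_eqI[of _ _ "(g, j)"]) auto
  have mult: "u \<otimes> v \<in> T" if uT: "u \<in> T" and vT: "v \<in> T" for u v
  proof -
    obtain g1 j1 where u: "g1 \<in> A" "j1 < p" "u = g1 \<otimes> b [^] j1" using uT unfolding T_def by auto
    obtain g2 j2 where v: "g2 \<in> A" "j2 < p" "v = g2 \<otimes> b [^] j2" using vT unfolding T_def by auto
    define g2' where "g2' = b [^] j1 \<otimes> g2 \<otimes> inv (b [^] j1)"
    have g2': "g2' \<in> A" unfolding g2'_def by (rule nat_pow_conj_closed[OF A.subset b]) (use norm v(1) in auto)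
    have c: "g1 \<in> carrier G" "g2 \<in> carrier G" "g2' \<in> carrier G" using u(1) v(1) g2' A.subset by auto
    have "u \<otimes> v = (g1 \<otimes> g2') \<otimes> (b [^] j1 \<otimes> b [^] j2)"
      using u(3) v(3) c b unfolding g2'_def by (simp add: m_assoc)
    then have uv: "u \<otimes> v = (g1 \<otimes> g2') \<otimes> b [^] (j1 + j2)" using b by (simp add: nat_pow_mult)
    show ?thesis
    proof (cases "j1 + j2 < p")
      case False
      then have "b [^] (j1 + j2) = b [^] p \<otimes> b [^] (j1 + j2 - p)" using b by (simp add: nat_pow_mult)
      then have "u \<otimes> v = (g1 \<otimes> g2' \<otimes> b [^] p) \<otimes> b [^] (j1 + j2 - p)"
        using uv c b by (simp add: m_assoc)
      moreover have "g1 \<otimes> g2' \<otimes> b [^] p \<in> A" using u(1) g2' bp by simp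
      moreover have "j1 + j2 - p < p" using u(2) v(2) by simp
      ultimately show ?thesis using T by simp
    qed (use T u(1) g2' uv in simp)
  qed
  have "\<one> \<in> T" using T[of \<one> 0] p by simp
  moreover have "T \<subseteq> carrier G" unfolding T_def using A.subset b by auto
  ultimately show ?thesis using finite_subgroupI[OF fin _ _ mult] unfolding T_def by blast
qed

lemma card_generate_insert_le:
  assumes fin: "finite (carrier G)" and A: "subgroup A G" and b: "b \<in> carrier G"
    and norm: "\<And>g. g \<in> A \<Longrightarrow> b \<otimes> g \<otimes> inv b \<in> A" and bp: "b [^] p \<in> A" and p: "p > 0"
  shows "card (generate G (insert b A)) \<le> card A * p"
proof -
  define T where "T = (\<lambda>(g, j). g \<otimes> b [^] j) ` (A \<times> {..<p})"
  have T: "subgroup T G" unfolding T_def by (rule subgroup_mult_nat_pows[OF assms])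
  have "b \<in> T"
  proof (cases "p = 1")
    case True
    then show ?thesis using bp b unfolding T_def by (force intro: image_eqI[of _ _ "(b, 0)"])
  next
    case False
    then have "(\<one>, 1) \<in> A \<times> {..<p}" using p subgroup.one_closed[OF A] by simp
    moreover have "b = (\<lambda>(g, j). g \<otimes> b [^] j) (\<one>, 1::nat)" using b by simp
    ultimately show ?thesis unfolding T_def by (rule image_eqI[rotated])
  qed
  moreover have "A \<subseteq> T" using subgroup.subset[OF A] p unfolding T_def by (force intro: image_eqI[of _ _ "(_, 0)"])
  ultimately have "generate G (insert b A) \<subseteq> T" using generate_subgroup_incl[OF _ T] by blast
  moreover have "card T \<le> card A * p"
    unfolding T_def using card_image_le[of "A \<times> {..<p}"] finite_subset[OF subgroup.subset[OF A] fin]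
    by (simp add: card_cartesian_product)
  ultimately show ?thesis
    using card_mono[OF finite_subset[OF subgroup.subset[OF T] fin]] by (meson order_trans)
qed

lemma image_subgroup_iso:
  assumes fin: "finite (carrier G)" and f: "f ` carrier Q \<subseteq> carrier G" and inj: "inj_on f (carrier Q)"
    and one: "\<one> \<in> f ` carrier Q"
    and closed: "\<And>u v. u \<in> carrier Q \<Longrightarrow> v \<in> carrier Q \<Longrightarrow> u \<otimes>\<^bsub>Q\<^esub> v \<in> carrier Q"
    and mult: "\<And>u v. u \<in> carrier Q \<Longrightarrow> v \<in> carrier Q \<Longrightarrow> f (u \<otimes>\<^bsub>Q\<^esub> v) = f u \<otimes> f v"
  shows "subgroup (f ` carrier Q) G" and "G\<lparr>carrier := f ` carrier Q\<rparr> \<cong> Q"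
proof -
  show "subgroup (f ` carrier Q) G"
    by (rule finite_subgroupI[OF fin f one]) (auto simp: mult[symmetric] closed)
  define g where "g = the_inv_into (carrier Q) f"
  have bij: "bij_betw g (f ` carrier Q) (carrier Q)"
    unfolding g_def using bij_betw_the_inv_into[of f "carrier Q"] inj by (simp add: bij_betw_def)
  have "g \<in> hom (G\<lparr>carrier := f ` carrier Q\<rparr>) Q"
  proof (rule homI)
    show "g x \<in> carrier Q" if "x \<in> carrier (G\<lparr>carrier := f ` carrier Q\<rparr>)" for x
      using that bij_betw_apply[OF bij] by simp
    show "g (x \<otimes>\<^bsub>G\<lparr>carrier := f ` carrier Q\<rparr>\<^esub> y) = g x \<otimes>\<^bsub>Q\<^esub> g y"
      if "x \<in> carrier (G\<lparr>carrier := f ` carrier Q\<rparr>)" "y \<in> carrier (G\<lparr>carrier := f ` carrier Q\<rparr>)" for x y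
      using that unfolding g_def by (auto simp: mult[symmetric] closed the_inv_into_f_f[OF inj])
  qed
  then show "G\<lparr>carrier := f ` carrier Q\<rparr> \<cong> Q"
    using bij unfolding is_iso_def iso_def by auto
qed

end

lemma group_actionI:
  assumes grp: "group G"
    and closed: "\<And>g x. g \<in> carrier G \<Longrightarrow> x \<in> E \<Longrightarrow> \<phi> g x \<in> E"
    and one: "\<And>x. x \<in> E \<Longrightarrow> \<phi> \<one>\<^bsub>G\<^esub> x = x"
    and mult: "\<And>g h x. g \<in> carrier G \<Longrightarrow> h \<in> carrier G \<Longrightarrow> x \<in> E \<Longrightarrow> \<phi> (g \<otimes>\<^bsub>G\<^esub> h) x = \<phi> g (\<phi> h x)"
  shows "group_action G E (\<lambda>g. restrict (\<phi> g) E)"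
proof -
  interpret G: group G by (rule grp)
  have bij: "restrict (\<phi> g) E \<in> Bij E" if g: "g \<in> carrier G" for g
  proof -
    have "bij_betw (\<phi> g) E E"
    proof (rule bij_betwI[where g = "\<phi> (inv\<^bsub>G\<^esub> g)"])
      show "\<phi> g \<in> E \<rightarrow> E" "\<phi> (inv\<^bsub>G\<^esub> g) \<in> E \<rightarrow> E" using closed g by auto
    qed (use mult[of "inv\<^bsub>G\<^esub> g" g] mult[of g "inv\<^bsub>G\<^esub> g"] one g in auto)
    then show ?thesis unfolding Bij_def by (simp add: bij_betw_restrict_eq)
  qed
  show ?thesis
    unfolding group_action_def
  proof (rule group_hom.intro[OF grp group_BijGroup], unfold_locales, rule homI)
    show "restrict (\<phi> g) E \<in> carrier (BijGroup E)" if "g \<in> carrier G" for g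
      using bij[OF that] by (simp add: BijGroup_def)
    show "restrict (\<phi> (g \<otimes>\<^bsub>G\<^esub> h)) E = restrict (\<phi> g) E \<otimes>\<^bsub>BijGroup E\<^esub> restrict (\<phi> h) E"
      if "g \<in> carrier G" "h \<in> carrier G" for g h
      using that bij[of g] bij[of h] mult closed by (auto simp: BijGroup_def compose_def)
  qed
qed

lemma (in group) singleton_orbits:
  assumes "group_action G E \<phi>"
  shows "{orb \<in> orbits G E \<phi>. card orb = 1} = (\<lambda>x. {x}) ` {x \<in> E. \<forall>g \<in> carrier G. \<phi> g x = x}"
proof (intro equalityI subsetI)
  fix orb assume "orb \<in> {orb \<in> orbits G E \<phi>. card orb = 1}"
  then obtain x where x: "x \<in> E" "orb = orbit G \<phi> x" "card orb = 1" unfolding orbits_def by blast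
  have "\<phi> \<one> x \<in> orb" using x(2) unfolding orbit_def by blast
  moreover have "\<phi> \<one> x = x" using fun_cong[OF group_action.id_eq_one[OF assms], of x] x(1) by simp
  moreover obtain y where "orb = {y}" using card_1_singletonE[OF x(3)] by blast
  ultimately have orb: "orb = {x}" by simp
  have "\<phi> g x = x" if "g \<in> carrier G" for g using that x(2) orb unfolding orbit_def by blast
  then show "orb \<in> (\<lambda>x. {x}) ` {x \<in> E. \<forall>g \<in> carrier G. \<phi> g x = x}" using x(1) orb by blast
next
  fix orb assume "orb \<in> (\<lambda>x. {x}) ` {x \<in> E. \<forall>g \<in> carrier G. \<phi> g x = x}"
  then obtain x where x: "x \<in> E" "\<forall>g \<in> carrier G. \<phi> g x = x" "orb = {x}" by blast
  have "orbit G \<phi> x = {x}" unfolding orbit_def using x(2) one_closed by force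
  then show "orb \<in> {orb \<in> orbits G E \<phi>. card orb = 1}" using x unfolding orbits_def by auto
qed

section \<open>Finite \<open>p\<close>-groups\<close>

locale finite_p_group = group G for G (structure) +
  fixes p :: nat
  assumes prime_p: "Factorial_Ring.prime p"
    and finite_carrier: "finite (carrier G)"
    and order_prime_power: "\<exists>k. order G = p ^ k"

lemma finite_p_group_of_p_group: "p_group p G \<Longrightarrow> finite_p_group G p"
  unfolding p_group_def finite_p_group_def finite_p_group_axioms_def by blast

context finite_p_group begin

lemma p_gt_1: "p > 1"
  using prime_p prime_gt_1_nat by blast

lemma card_subgroup_prime_power:
  assumes "subgroup K G" shows "\<exists>j. card K = p ^ j"
proof -
  have "card K dvd order G" using lagrange[OF assms] by (metis dvd_triv_right)
  then show ?thesis using order_prime_power divides_primepow_nat[OF prime_p] by auto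
qed

lemma ord_prime_power:
  assumes "x \<in> carrier G" shows "\<exists>e. ord x = p ^ e"
  using ord_dvd_group_order[OF assms] order_prime_power divides_primepow_nat[OF prime_p] by auto

lemma exists_nat_pow_ord_eq_prime:
  assumes z: "z \<in> carrier G" and z1: "z \<noteq> \<one>"
  shows "\<exists>n::nat. ord (z [^] n) = p"
proof -
  obtain e where e: "ord z = p ^ e" using ord_prime_power[OF z] by blast
  then obtain f where f: "e = Suc f" using z1 ord_eq_1[OF z] by (cases e) auto
  have "ord (z [^] (p ^ f)) = ord z div p ^ f"
    by (rule ord_pow[OF z]) (use e f p_gt_1 in auto)
  also have "\<dots> = p" using e f p_gt_1 by simp
  finally show ?thesis by blast
qed

lemma subgroup_finite_p_group:
  assumes H: "subgroup H G" shows "finite_p_group (G\<lparr>carrier := H\<rparr>) p"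
proof -
  have "finite H" using finite_subset[OF subgroup.subset[OF H] finite_carrier] .
  then show ?thesis
    using subgroup.subgroup_is_group[OF H is_group] prime_p card_subgroup_prime_power[OF H]
    by (simp add: finite_p_group_def finite_p_group_axioms_def order_def)
qed

text \<open>Orbits of a \<open>p\<close>-group action have \<open>p\<close>-power size, so only the fixed points survive modulo \<open>p\<close>.\<close>

lemma card_fixed_points_cong:
  assumes finE: "finite E"
    and closed: "\<And>g x. g \<in> carrier G \<Longrightarrow> x \<in> E \<Longrightarrow> \<phi> g x \<in> E"
    and one: "\<And>x. x \<in> E \<Longrightarrow> \<phi> \<one> x = x"
    and mult: "\<And>g h x. g \<in> carrier G \<Longrightarrow> h \<in> carrier G \<Longrightarrow> x \<in> E \<Longrightarrow> \<phi> (g \<otimes> h) x = \<phi> g (\<phi> h x)"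
  shows "card E mod p = card {x \<in> E. \<forall>g \<in> carrier G. \<phi> g x = x} mod p"
proof -
  define \<psi> where "\<psi> = (\<lambda>g. restrict (\<phi> g) E)"
  interpret A: group_action G E \<psi>
    unfolding \<psi>_def by (rule group_actionI[OF is_group closed one mult])
  let ?O = "orbits G E \<psi>"
  have finO: "finite ?O" using finE unfolding orbits_def by simp
  have card_orbit_mod: "card orb mod p = (if card orb = 1 then 1 else 0)" if orb: "orb \<in> ?O" for orb
  proof -
    obtain x where x: "x \<in> E" "orb = orbit G \<psi> x" using orb unfolding orbits_def by blast
    obtain k where "order G = p ^ k" using order_prime_power by blast
    then have "card orb dvd p ^ k"
      using A.orbit_stabilizer_theorem[OF x(1)] x(2) by (metis dvd_triv_left)
    then obtain i where "card orb = p ^ i" using divides_primepow_nat[OF prime_p] by blast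
    then show ?thesis using p_gt_1 by (cases i) auto
  qed
  have fixed: "{x \<in> E. \<forall>g \<in> carrier G. \<psi> g x = x} = {x \<in> E. \<forall>g \<in> carrier G. \<phi> g x = x}"
    unfolding \<psi>_def by auto
  have "card E = (\<Sum>orb\<in>?O. card orb)"
    using A.disjoint_sum[OF finE, of "\<lambda>_. 1::nat"] by simp
  then have "card E mod p = (\<Sum>orb\<in>?O. card orb mod p) mod p"
    by (simp add: mod_sum_eq)
  also have "(\<Sum>orb\<in>?O. card orb mod p) = (\<Sum>orb\<in>?O. if card orb = 1 then 1 else 0)"
    using card_orbit_mod by (intro sum.cong) auto
  also have "\<dots> = card {orb \<in> ?O. card orb = 1}"
    using finO by (simp add: sum.If_cases Int_def)
  also have "\<dots> = card {x \<in> E. \<forall>g \<in> carrier G. \<phi> g x = x}"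
    unfolding singleton_orbits[OF A.group_action_axioms] fixed by (simp add: card_image)
  finally show ?thesis .
qed

lemma normal_subgroup_meets_center:
  assumes N: "N \<lhd> G" and nt: "N \<noteq> {\<one>}"
  shows "\<exists>z \<in> N. z \<in> center_of G \<and> ord z = p"
proof -
  interpret N: normal N G by (rule N)
  have finN: "finite N" using finite_subset[OF N.subset finite_carrier] .
  let ?F = "{x \<in> N. \<forall>g \<in> carrier G. g \<otimes> x \<otimes> inv g = x}"
  have "card N mod p = card ?F mod p"
  proof (rule card_fixed_points_cong[OF finN])
    show "g \<otimes> x \<otimes> inv g \<in> N" if "g \<in> carrier G" "x \<in> N" for g x
      using N.inv_op_closed2 that by blast
    show "\<one> \<otimes> x \<otimes> inv \<one> = x" if "x \<in> N" for x using that N.subset by auto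
    show "g \<otimes> h \<otimes> x \<otimes> inv (g \<otimes> h) = g \<otimes> (h \<otimes> x \<otimes> inv h) \<otimes> inv g"
      if "g \<in> carrier G" "h \<in> carrier G" "x \<in> N" for g h x
      using that N.subset by (auto simp: inv_mult_group m_assoc)
  qed
  moreover obtain j where j: "card N = p ^ j" using card_subgroup_prime_power[OF N.subgroup_axioms] by blast
  moreover have "j \<noteq> 0"
    using j nt N.one_closed by (metis card_1_singletonE power_0 singletonD)
  ultimately have "card ?F mod p = 0" by simp
  then have "?F \<noteq> {\<one>}" using p_gt_1 by (intro notI) simp
  moreover have "\<one> \<in> ?F" by simp
  ultimately obtain z where zF: "z \<in> ?F" and z1: "z \<noteq> \<one>" by blast
  have zc: "z \<in> carrier G" using zF N.subset by auto
  have "z \<otimes> g = g \<otimes> z" if g: "g \<in> carrier G" for g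
  proof -
    have "g \<otimes> z \<otimes> inv g \<otimes> g = z \<otimes> g" using zF g by simp
    then show ?thesis using g zc by (simp add: m_assoc)
  qed
  then have "z \<in> center_of G" unfolding center_of_def using zc by blast
  then have "z [^] n \<in> center_of G" for n :: nat
    using zc group_commutes_pow unfolding center_of_def by auto
  moreover obtain n where "ord (z [^] (n::nat)) = p" using exists_nat_pow_ord_eq_prime[OF zc z1] by blast
  moreover have "z [^] n \<in> N" using N.subgroup_axioms zF by (auto intro: subgroup_nat_pow_closed)
  ultimately show ?thesis by blast
qed

lemma card_rcosets_mod_prime:
  assumes K: "subgroup K G" and M: "subgroup M G" and MK: "M \<subset> K"
  shows "card {M #> y | y. y \<in> K} mod p = 0"
proof -
  interpret K: subgroup K G by (rule K)
  interpret Kg: group "G\<lparr>carrier := K\<rparr>" by (rule K.subgroup_is_group[OF is_group])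
  have "rcosets\<^bsub>G\<lparr>carrier := K\<rparr>\<^esub> M = {M #> y | y. y \<in> K}" unfolding RCOSETS_def r_coset_def by auto
  then have "card {M #> y | y. y \<in> K} * card M = card K"
    using Kg.lagrange[OF subgroup_incl[OF M K]] MK by (simp add: order_def)
  moreover obtain n j where "card M = p ^ n" "card K = p ^ j"
    using card_subgroup_prime_power M K by metis
  moreover have "card M < card K" using MK finite_subset[OF K.subset finite_carrier] by (simp add: psubset_card_mono)
  ultimately have "card {M #> y | y. y \<in> K} * p ^ n = p ^ (j - n) * p ^ n" "n < j"
    using p_gt_1 by (auto simp: power_add[symmetric])
  then show ?thesis using p_gt_1 by simp
qed

text \<open>\<open>M\<close> acts on its right cosets in \<open>K\<close> by right multiplication; \<open>M\<close> itself is a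
  fixed point, so by the congruence above there is another one.\<close>

lemma exists_fixed_rcoset:
  assumes K: "subgroup K G" and M: "subgroup M G" and MK: "M \<subset> K"
  shows "\<exists>y \<in> K. M #> y \<noteq> M \<and> (\<forall>m \<in> M. M #> y #> inv m = M #> y)"
proof -
  interpret K: subgroup K G by (rule K)
  interpret M: subgroup M G by (rule M)
  interpret Mp: finite_p_group "G\<lparr>carrier := M\<rparr>" p by (rule subgroup_finite_p_group[OF M])
  let ?E = "{M #> y | y. y \<in> K}"
  let ?F = "{C \<in> ?E. \<forall>m \<in> M. C #> inv m = C}"
  have Esub: "C \<subseteq> carrier G" if "C \<in> ?E" for C
    using that M.subset K.subset by (auto simp: r_coset_def)
  have "card ?E mod p = card ?F mod p"
  proof (rule Mp.card_fixed_points_cong[where \<phi> = "\<lambda>m C. C #> inv m", simplified])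
    show "finite ?E" using finite_subset[OF K.subset finite_carrier] by simp
    show "C #> inv m \<in> ?E" if m: "m \<in> M" and C: "C \<in> ?E" for m C
    proof -
      obtain y where y: "y \<in> K" "C = M #> y" using C by blast
      have "inv m \<in> K" using m MK by blast
      then have "C #> inv m = M #> (y \<otimes> inv m)" "y \<otimes> inv m \<in> K"
        using y K.subset M.subset by (auto simp: coset_mult_assoc)
      then show ?thesis by blast
    qed
    show "C #> \<one> = C" if "C \<in> ?E" for C using coset_mult_one[OF Esub[OF that]] .
    show "C #> inv (m1 \<otimes> m2) = C #> inv m2 #> inv m1" if "m1 \<in> M" "m2 \<in> M" "C \<in> ?E" for m1 m2 C
    proof -
      have "m1 \<in> carrier G" "m2 \<in> carrier G" using that(1,2) M.subset by auto
      then show ?thesis using coset_mult_assoc[OF Esub[OF that(3)]] by (simp add: inv_mult_group)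
    qed
  qed
  then have "?F \<noteq> {M}" using card_rcosets_mod_prime[OF K M MK] p_gt_1 by (intro notI) simp
  moreover have "M \<in> ?F"
  proof -
    have "M = M #> \<one>" using M.subset by (simp add: coset_mult_one)
    then have "M \<in> ?E" using K.one_closed by blast
    moreover have "M #> inv m = M" if "m \<in> M" for m
      using coset_join2[OF _ M] M.m_inv_closed[OF that] M.subset by blast
    ultimately show ?thesis by blast
  qed
  ultimately show ?thesis by blast
qed

lemma exists_normalizing_element_outside:
  assumes K: "subgroup K G" and M: "subgroup M G" and MK: "M \<subset> K"
  shows "\<exists>y \<in> K. y \<notin> M \<and> (\<forall>a \<in> M. y \<otimes> a \<otimes> inv y \<in> M)"
proof -
  interpret M: subgroup M G by (rule M)
  obtain y where y: "y \<in> K" "M #> y \<noteq> M" and fixed: "\<forall>m \<in> M. M #> y #> inv m = M #> y"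
    using exists_fixed_rcoset[OF K M MK] by blast
  have yc: "y \<in> carrier G" using y(1) subgroup.subset[OF K] by blast
  have "y \<notin> M" using y(2) coset_join2[OF yc M] by blast
  moreover have "y \<otimes> a \<otimes> inv y \<in> M" if a: "a \<in> M" for a
  proof -
    have ac: "a \<in> carrier G" using a M.subset by blast
    have "M #> y #> inv (inv a) = M #> y" using fixed M.m_inv_closed[OF a] by blast
    then have "M #> (y \<otimes> a) = M #> y" using coset_mult_assoc[OF M.subset yc ac] ac by simp
    then have "y \<otimes> a \<in> M #> y" using rcos_self[OF m_closed[OF yc ac] M] by simp
    then obtain m where "m \<in> M" "y \<otimes> a = m \<otimes> y" unfolding r_coset_def by blast
    then show ?thesis using yc ac M.subset by (auto simp: m_assoc)
  qed
  ultimately show ?thesis using y(1) by blast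
qed

lemma ord_ne_zero: "x \<in> carrier G \<Longrightarrow> ord x \<noteq> 0"
  using ord_ge_1[OF finite_carrier] by fastforce

lemma conj_mem_generate_nat_pow:
  assumes a: "a \<in> carrier G" and x: "x \<in> carrier G" and norm: "x \<otimes> a \<otimes> inv x \<in> generate G {a}"
    and g: "g \<in> generate G {a [^] (k::nat)}"
  shows "x \<otimes> g \<otimes> inv x \<in> generate G {a [^] k}"
proof -
  obtain m :: nat where m: "x \<otimes> a \<otimes> inv x = a [^] m" using norm generate_pow_nat[OF a ord_ne_zero[OF a]] by blast
  have ak: "a [^] k \<in> carrier G" using a by simp
  obtain t :: nat where t: "g = (a [^] k) [^] t" using g generate_pow_nat[OF ak ord_ne_zero[OF ak]] by blast
  have "x \<otimes> g \<otimes> inv x = (x \<otimes> a \<otimes> inv x) [^] (k * t)"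
    using t conj_nat_pow[OF x a] a by (simp add: nat_pow_pow)
  also have "\<dots> = (a [^] k) [^] (m * t)" using m a by (simp add: nat_pow_pow mult.commute mult.left_commute)
  finally show ?thesis using nat_pow_mem_generate a by simp
qed

lemma exists_pow_outside_with_pow_inside:
  assumes M: "subgroup M G" and y: "y \<in> carrier G" and yM: "y \<notin> M"
  shows "\<exists>t. y [^] (p ^ t) \<notin> M \<and> (y [^] (p ^ t)) [^] p \<in> M"
proof -
  obtain e where "ord y = p ^ e" using ord_prime_power[OF y] by blast
  then have ex: "\<exists>t. y [^] (p ^ t) \<in> M" using subgroup.one_closed[OF M] y by (metis pow_ord_eq_1)
  define t where "t = (LEAST t. y [^] (p ^ t) \<in> M)"
  have tM: "y [^] (p ^ t) \<in> M" unfolding t_def by (rule LeastI_ex[OF ex])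
  then obtain t' where t': "t = Suc t'" using yM y by (cases t) auto
  have "y [^] (p ^ t') \<notin> M"
    using not_less_Least[of t' "\<lambda>t. y [^] (p ^ t) \<in> M"] t' unfolding t_def by simp
  moreover have "(y [^] (p ^ t')) [^] p = y [^] (p ^ t)" using y t' by (simp add: nat_pow_pow mult.commute)
  ultimately show ?thesis using tM by metis
qed

text \<open>If \<open>b\<^sup>p = a\<^sup>s\<close> with \<open>p \<nmid> s\<close>, then \<open>\<langle>b\<rangle>\<close> would properly contain \<open>\<langle>a\<rangle>\<close>.\<close>

lemma pow_prime_in_cyclic_of_max_order:
  assumes K: "subgroup K G" and a: "a \<in> K" and amax: "\<And>y. y \<in> K \<Longrightarrow> ord y \<le> ord a"
    and oa: "ord a = p ^ n" and b: "b \<in> K" and b_notin: "b \<notin> generate G {a}"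
    and bp: "b [^] p \<in> generate G {a}"
  shows "\<exists>s. b [^] p = a [^] (p * s) \<and> s < p ^ (n - 1)"
proof -
  have ac: "a \<in> carrier G" and bc: "b \<in> carrier G" using a b subgroup.subset[OF K] by auto
  obtain s0 :: nat where "b [^] p = a [^] s0" using bp generate_pow_nat[OF ac ord_ne_zero[OF ac]] by blast
  then have bs: "b [^] p = a [^] (s0 mod ord a)" using nat_pow_mod_ord[OF ac] by simp
  have "p dvd s0 mod ord a"
  proof (rule ccontr)
    assume nd: "\<not> p dvd s0 mod ord a"
    then have "gcd (ord a) (s0 mod ord a) = 1"
      using prime_imp_power_coprime_nat[OF prime_p nd] oa by (simp add: coprime_iff_gcd_eq_1 gcd.commute)
    then have "a [^] (1::nat) \<in> generate G {b [^] p}"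
      using nat_pow_mem_generate_nat_pow[OF ac, of "s0 mod ord a" 1] bs by simp
    moreover have "generate G {b [^] p} \<subseteq> generate G {b}"
      using bc nat_pow_mem_generate[OF bc] by (intro generate_subgroup_incl generate_is_subgroup) auto
    ultimately have "generate G {a} \<subseteq> generate G {b}"
      using ac bc by (intro generate_subgroup_incl generate_is_subgroup) auto
    moreover have "b \<in> generate G {b}" by (rule generate.incl) simp
    ultimately have "generate G {a} \<subset> generate G {b}" using b_notin by blast
    then have "ord a < ord b"
      using psubset_card_mono[OF finite_subset[OF generate_incl finite_carrier]] ac bc
      by (simp add: generate_pow_card)
    then show False using amax[OF b] by simp
  qed
  then obtain s where s: "s0 mod ord a = p * s" by blast
  moreover have "s < p ^ (n - 1)"
  proof -
    have "p * s < p ^ n" using s oa ord_ne_zero[OF ac] by (metis mod_less_divisor neq0_conv)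
    then show ?thesis using p_gt_1 by (cases n) auto
  qed
  ultimately show ?thesis using bs by auto
qed

lemma unique_ord_prime_mem_generate:
  assumes a: "a \<in> carrier G" "a \<noteq> \<one>" and z: "z \<in> carrier G" "ord z = p"
    and uniq: "\<And>w. w \<in> generate G {a} \<Longrightarrow> w [^] p = \<one> \<Longrightarrow> w \<in> generate G {z}"
  shows "z \<in> generate G {a}"
proof -
  obtain k where e: "ord (a [^] (k::nat)) = p" using exists_nat_pow_ord_eq_prime[OF a] by blast
  have ec: "a [^] k \<in> carrier G" using a by simp
  then have "a [^] k \<noteq> \<one>" using e p_gt_1 ord_eq_1 by auto
  moreover have "a [^] k \<in> generate G {z}"
    using uniq[OF nat_pow_mem_generate[OF a(1)]] e pow_ord_eq_1[OF ec] by simp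
  ultimately have "z \<in> generate G {a [^] k}"
    using ord_prime_mem_generate[OF z(1) _ prime_p _ _ z(2), of 1] generate.incl[of z "{z}" G] z by simp
  moreover have "generate G {a [^] k} \<subseteq> generate G {a}"
    using a(1) nat_pow_mem_generate[OF a(1)] by (intro generate_subgroup_incl generate_is_subgroup) auto
  ultimately show ?thesis by blast
qed

text \<open>The subgroup \<open>\<langle>a\<^sup>p, b\<rangle>\<close> has order at most \<open>|\<langle>a\<rangle>|\<close>, hence is proper in \<open>K\<close> and
  therefore cyclic by minimality.\<close>

lemma pow_prime_commute_in_minimal_noncyclic:
  assumes K: "subgroup K G" and minimal: "\<And>L. subgroup L G \<Longrightarrow> L \<subset> K \<Longrightarrow> \<exists>c \<in> carrier G. L = generate G {c}"
    and a: "a \<in> K" and oa: "ord a = p ^ n" and n: "n \<ge> 1" and aK: "generate G {a} \<subset> K"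
    and b: "b \<in> K" and norm: "b \<otimes> a \<otimes> inv b \<in> generate G {a}" and bp: "b [^] p = a [^] (p * s)"
  shows "a [^] p \<otimes> b = b \<otimes> a [^] p"
proof -
  interpret K: subgroup K G by (rule K)
  have ac: "a \<in> carrier G" and bc: "b \<in> carrier G" using a b K.subset by auto
  have apc: "a [^] p \<in> carrier G" using ac by simp
  define A where "A = generate G {a [^] p}"
  have A: "subgroup A G" unfolding A_def using apc by (intro generate_is_subgroup) auto
  have "ord (a [^] p) = p ^ (n - 1)"
    using ord_pow[OF ac] oa n p_gt_1 by (simp add: dvd_power power_diff)
  then have cardA: "card A = p ^ (n - 1)" unfolding A_def using generate_pow_card[OF apc] by simp
  define L where "L = generate G (insert b A)"
  have "card L \<le> card A * p"
    unfolding L_def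
  proof (rule card_generate_insert_le[OF finite_carrier A bc _ _ prime_gt_0_nat[OF prime_p]])
    show "b \<otimes> g \<otimes> inv b \<in> A" if "g \<in> A" for g
      using conj_mem_generate_nat_pow[OF ac bc norm] that unfolding A_def .
    show "b [^] p \<in> A" unfolding A_def bp using ac nat_pow_mem_generate[OF apc] by (simp add: nat_pow_pow)
  qed
  also have "\<dots> = card (generate G {a})"
    using cardA oa n generate_pow_card[OF ac] power_minus_mult[of n p] by simp
  finally have card_L: "card L < card K"
    using psubset_card_mono[OF finite_subset[OF K.subset finite_carrier] aK] by simp
  have "L \<subseteq> K"
  proof -
    have "A \<subseteq> K" unfolding A_def
      using subgroup_nat_pow_closed[OF K a] by (intro generate_subgroup_incl[OF _ K]) simp
    then show ?thesis unfolding L_def using b by (intro generate_subgroup_incl[OF _ K]) simp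
  qed
  moreover have "subgroup L G" unfolding L_def using bc subgroup.subset[OF A] by (intro generate_is_subgroup) simp
  moreover have "L \<noteq> K" using card_L by blast
  ultimately obtain c where c: "c \<in> carrier G" "L = generate G {c}" using minimal by blast
  have "a [^] p \<in> L" "b \<in> L" unfolding L_def A_def by (auto intro: generate.incl)
  then obtain i j :: nat where "a [^] p = c [^] i" "b = c [^] j"
    using generate_pow_nat[OF c(1) ord_ne_zero[OF c(1)]] c(2) by auto
  then show ?thesis using commute_nat_pow[OF c(1) c(1) refl] by simp
qed

lemma not_cyclic_pair:
  assumes x: "x \<in> carrier G" "ord x = p" and y: "y \<in> carrier G" "y \<noteq> \<one>" and x_notin: "x \<notin> generate G {y}"
  shows "\<not> cyclic_group (subgroup_generated G {x, y})"
proof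
  assume "cyclic_group (subgroup_generated G {x, y})"
  then obtain c where c: "c \<in> carrier G" "generate G {x, y} = generate G {c}"
    using cyclic_group_subgroup_generated_iff[of "{x, y}"] x y by auto
  then have "x \<in> generate G {c}" "y \<in> generate G {c}" using generate.incl[of _ "{x, y}" G] by auto
  moreover obtain m where "ord c = p ^ m" using ord_prime_power[OF c(1)] by blast
  ultimately show False using ord_prime_mem_generate[OF c(1) _ prime_p _ _ x(2) y(2)] x_notin by blast
qed

lemma center_of_if_derived_trivial:
  assumes D: "derived G (carrier G) = {\<one>}" and x: "x \<in> carrier G"
  shows "x \<in> center_of G"
proof -
  have "x \<otimes> y = y \<otimes> x" if y: "y \<in> carrier G" for y
  proof -
    have "commutator x y \<in> derived G (carrier G)"
      unfolding derived_def commutator_def using x y by (intro generate.incl) blast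
    then show ?thesis using D x y commutator_eq_one_iff by blast
  qed
  then show ?thesis unfolding center_of_def using x by blast
qed

end

section \<open>Generalized quaternion subgroups\<close>

context group begin

lemma commutator_of_normalizing_element:
  assumes p: "Factorial_Ring.prime p" and a: "a \<in> carrier G" and b: "b \<in> carrier G"
    and oa: "ord a = p ^ Suc (Suc m)"
    and comm: "a [^] p \<otimes> b = b \<otimes> a [^] p" and conj: "b \<otimes> a \<otimes> inv b \<in> generate G {a}"
  obtains i where "commutator b a = (a [^] (p ^ Suc m)) [^] (i::nat)"
    and "commutator b a \<otimes> a = a \<otimes> commutator b a" and "commutator b a \<otimes> b = b \<otimes> commutator b a"
    and "b \<otimes> a = commutator b a \<otimes> a \<otimes> b" and "commutator b a [^] p = \<one>"
proof -
  define d where "d = commutator b a"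
  have o0: "ord a \<noteq> 0" using oa p prime_gt_0_nat by simp
  have dc: "d \<in> carrier G" unfolding d_def using a b by simp
  have da_conj: "d \<otimes> a = b \<otimes> a \<otimes> inv b" unfolding d_def commutator_def using a b by (simp add: m_assoc)
  have "d \<in> generate G {a}"
    unfolding d_def commutator_def
    using conj generate_m_inv_closed[of "{a}"] generate.incl[of a "{a}" G] a by (auto intro: generate.eng)
  then obtain i0 where "d = a [^] (i0::nat)" using generate_pow_nat[OF a o0] by blast
  then have da: "d \<otimes> a = a \<otimes> d" using a by (simp add: nat_pow_Suc2[symmetric])
  have "(d \<otimes> a) [^] p = b \<otimes> a [^] p \<otimes> inv b" unfolding da_conj using conj_nat_pow[OF b a] by simp
  also have "\<dots> = a [^] p \<otimes> b \<otimes> inv b" using comm by simp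
  also have "\<dots> = a [^] p" using a b by (simp add: m_assoc)
  finally have "d [^] p \<otimes> a [^] p = a [^] p" using pow_mult_distrib[OF da dc a] by simp
  then have dp: "d [^] p = \<one>" using dc a by (metis l_one nat_pow_closed one_closed right_cancel)
  obtain i :: nat where i: "d = (a [^] (p ^ Suc m)) [^] i"
    using cyclic_pow_prime_eq_one[OF a oa p \<open>d \<in> generate G {a}\<close> dp] by blast
  then have "d = (a [^] p) [^] (p ^ m * i)" using a by (simp add: nat_pow_pow mult.assoc)
  then have db: "d \<otimes> b = b \<otimes> d"
    using commute_nat_pow[OF nat_pow_closed[OF a] b comm, of "p ^ m * i" 1] b by simp
  have "b \<otimes> a = d \<otimes> a \<otimes> b" using da_conj a b by (simp add: m_assoc)
  then show ?thesis using that[of i] i da db dp unfolding d_def by blast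
qed

lemma exists_coset_square_eq_one:
  assumes a: "a \<in> carrier G" and b: "b \<in> carrier G" and oa: "ord a = 8 * q"
    and b2: "b [^] (2::nat) = a [^] (2 * s)" and s: "s < 4 * q"
    and sq: "\<And>k. (a [^] k \<otimes> b) [^] (2::nat) = a [^] (4 * q * k) \<otimes> a [^] (2 * k) \<otimes> b [^] (2::nat)"
  shows "\<exists>k::nat. (a [^] k \<otimes> b) [^] (2::nat) = \<one>"
proof -
  obtain r where rs: "r + s = 4 * q" using s by (metis less_imp_add_positive add.commute)
  define k where "k = r * (1 + 2 * q)"
  have "4 * q * k + 2 * k + 2 * s = 2 * (r + s) + 8 * r * q + 8 * r * q * q"
    unfolding k_def by (simp add: algebra_simps)
  also have "\<dots> = ord a * (1 + r + r * q)" unfolding rs oa by (simp add: algebra_simps)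
  finally have exp: "4 * q * k + 2 * k + 2 * s = ord a * (1 + r + r * q)" .
  have "(a [^] k \<otimes> b) [^] (2::nat) = a [^] (4 * q * k + 2 * k + 2 * s)"
    using sq[of k] b2 a by (simp add: nat_pow_mult)
  also have "\<dots> = (a [^] ord a) [^] (1 + r + r * q)"
    unfolding exp by (rule nat_pow_pow[OF a, symmetric])
  finally show ?thesis using a by auto
qed

lemma involution_commutator_of_no_root:
  assumes p: "Factorial_Ring.prime p" and a: "a \<in> carrier G" and b: "b \<in> carrier G"
    and oa: "ord a = p ^ Suc (Suc m)" and bp: "b [^] p = a [^] (p * s)" and s: "s < p ^ Suc m"
    and comm: "a [^] p \<otimes> b = b \<otimes> a [^] p" and conj: "b \<otimes> a \<otimes> inv b \<in> generate G {a}"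
    and no_root: "\<And>k::nat. (a [^] k \<otimes> b) [^] p \<noteq> \<one>"
  shows "p = 2 \<and> commutator b a = a [^] (2 ^ Suc m :: nat)"
proof -
  obtain i :: nat where di: "commutator b a = (a [^] (p ^ Suc m)) [^] i"
    and da: "commutator b a \<otimes> a = a \<otimes> commutator b a" and db: "commutator b a \<otimes> b = b \<otimes> commutator b a"
    and ba: "b \<otimes> a = commutator b a \<otimes> a \<otimes> b" and dp: "commutator b a [^] p = \<one>"
    using commutator_of_normalizing_element[OF p a b oa comm conj] by blast
  define d where "d = commutator b a"
  have dc: "d \<in> carrier G" unfolding d_def using a b by simp
  define k where "k = p ^ Suc m - s"
  have "k * p + p * s = ord a" unfolding k_def using s oa by (simp add: algebra_simps diff_mult_distrib)
  then have "a [^] (k * p) \<otimes> b [^] p = \<one>" using bp a by (simp add: nat_pow_mult)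
  then have k_root: "(a [^] k \<otimes> b) [^] p = d [^] (k * (p * (p - 1) div 2))"
    using nat_pow_mult_of_central_commutator[OF a b dc ba[folded d_def] da[folded d_def] db[folded d_def], of k p]
      a b dc by (simp add: m_assoc)
  have p2: "p = 2"
  proof (rule ccontr)
    assume "p \<noteq> 2"
    then have "odd p" using p prime_gt_1_nat[OF p] prime_odd_nat by simp
    then have "d [^] (k * (p * (p - 1) div 2)) = (d [^] p) [^] (k * ((p - 1) div 2))"
      using dc by (simp add: nat_pow_pow div_mult_swap algebra_simps)
    then show False using k_root no_root dp unfolding d_def by simp
  qed
  define e where "e = a [^] (2 ^ Suc m :: nat)"
  have ec: "e \<in> carrier G" unfolding e_def using a by simp
  have "e [^] (2::nat) = a [^] ord a" unfolding e_def using a oa p2 by (simp add: nat_pow_pow)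
  then have e2: "e [^] (2::nat) = \<one>" using a by simp
  have "d = e [^] i" using di p2 unfolding d_def e_def by simp
  also have "\<dots> = e [^] (2 * (i div 2)) \<otimes> e [^] (i mod 2)" using ec by (simp add: nat_pow_mult)
  also have "e [^] (2 * (i div 2)) = \<one>" using ec e2 by (simp add: nat_pow_pow[symmetric])
  finally have "d = e [^] (i mod 2)" using ec by simp
  moreover have "d \<noteq> \<one>" using k_root no_root by auto
  ultimately have "d = e" using ec by (cases "i mod 2 = 0") auto
  then show ?thesis using p2 unfolding d_def e_def by simp
qed

lemma quaternion_relations:
  assumes p: "Factorial_Ring.prime p" and a: "a \<in> carrier G" and b: "b \<in> carrier G"
    and oa: "ord a = p ^ n" and n1: "n \<ge> 1"
    and bp: "b [^] p = a [^] (p * s)" and s: "s < p ^ (n - 1)"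
    and comm: "a [^] p \<otimes> b = b \<otimes> a [^] p" and conj: "b \<otimes> a \<otimes> inv b \<in> generate G {a}"
    and no_root: "\<And>k::nat. (a [^] k \<otimes> b) [^] p \<noteq> \<one>"
  shows "p = 2 \<and> n = 2 \<and> b \<otimes> a \<otimes> inv b = a [^] (3::nat) \<and> b [^] (2::nat) = a [^] (2::nat)"
proof -
  have "n \<noteq> 1" using no_root[of 0] bp s b by (intro notI) simp
  then have "n \<ge> 2" using n1 by simp
  then obtain m where m: "n = Suc (Suc m)" by (metis add_2_eq_Suc le_Suc_ex)
  then have oa': "ord a = p ^ Suc (Suc m)" using oa by simp
  have p2: "p = 2" and de: "commutator b a = a [^] (2 ^ Suc m :: nat)"
    using involution_commutator_of_no_root[OF p a b oa' bp _ comm conj no_root] s m by simp_all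
  obtain i :: nat where da: "commutator b a \<otimes> a = a \<otimes> commutator b a"
    and db: "commutator b a \<otimes> b = b \<otimes> commutator b a" and ba: "b \<otimes> a = commutator b a \<otimes> a \<otimes> b"
    using commutator_of_normalizing_element[OF p a b oa' comm conj] by blast
  have dc: "commutator b a \<in> carrier G" using a b by simp
  have sq: "(a [^] k \<otimes> b) [^] (2::nat) = a [^] (2 ^ Suc m * k) \<otimes> a [^] (2 * k) \<otimes> b [^] (2::nat)" for k :: nat
    using nat_pow_mult_of_central_commutator[OF a b dc ba da db, of k 2] de a
    by (simp add: nat_pow_pow mult.commute)
  show ?thesis
  proof (cases m)
    case (Suc m')
    have o8: "ord a = 8 * 2 ^ m'" and s4: "s < 4 * 2 ^ m'" and b2: "b [^] (2::nat) = a [^] (2 * s)"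
      using oa' s bp m p2 Suc by simp_all
    have "(2::nat) ^ Suc m = 4 * 2 ^ m'" using Suc by simp
    then have "(a [^] k \<otimes> b) [^] (2::nat) = a [^] (4 * 2 ^ m' * k) \<otimes> a [^] (2 * k) \<otimes> b [^] (2::nat)"
      for k :: nat using sq[of k] by simp
    then obtain k :: nat where "(a [^] k \<otimes> b) [^] (2::nat) = \<one>"
      using exists_coset_square_eq_one[OF a b o8 b2 s4] by blast
    then show ?thesis using no_root p2 by blast
  next
    case 0
    have "b \<otimes> a \<otimes> inv b = commutator b a \<otimes> a" using ba a b by (simp add: m_assoc)
    also have "\<dots> = a [^] (3::nat)" using a 0 de by (simp add: numeral_3_eq_3 numeral_2_eq_2)
    finally have "b \<otimes> a \<otimes> inv b = a [^] (3::nat)" .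
    moreover have "s = 1" using no_root[of 0] bp b s 0 p2 m by (cases s) auto
    ultimately show ?thesis using bp p2 m 0 by simp
  qed
qed

end

lemma quaternion_group_3_carrier: "carrier (quaternion_group 3) = {(i, j). i < 4 \<and> j < 2}"
  unfolding quaternion_group_def Let_def by simp

lemma quaternion_group_3_mult:
  "(i, j) \<otimes>\<^bsub>quaternion_group 3\<^esub> (k, l) =
     (if j = 0 then ((i + k) mod 4, l)
      else if l = 0 then ((i + 4 - k) mod 4, 1)
      else ((i + 4 - k + 2) mod 4, 0))"
  unfolding quaternion_group_def Let_def by simp

lemma mod_4_minus: "(k::nat) < 4 \<Longrightarrow> (i + 3 * k) mod 4 = (i + 4 - k) mod 4"
proof -
  assume "k < 4"
  then have "k = 0 \<or> k = 1 \<or> k = 2 \<or> k = 3" by auto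
  moreover have "(i + 6) mod 4 = (i + 2) mod 4" using mod_add_self2[of "i + 2" 4] by (simp add: add.commute)
  moreover have "(i + 9) mod 4 = (i + 1) mod 4" using mod_mult_self1[of "i + 1" 2 4] by (simp add: add.commute)
  ultimately show ?thesis by (elim disjE) (simp_all add: add.commute)
qed

context group begin

lemma quaternion_word_mult:
  assumes a: "a \<in> carrier G" and b: "b \<in> carrier G" and oa: "ord a = 4"
    and conj: "b \<otimes> a \<otimes> inv b = a [^] (3::nat)" and b2: "b [^] (2::nat) = a [^] (2::nat)"
    and u: "(i, j) \<in> carrier (quaternion_group 3)" and v: "(k, l) \<in> carrier (quaternion_group 3)"
  shows "(\<lambda>(i, j). a [^] i \<otimes> b [^] j) ((i, j) \<otimes>\<^bsub>quaternion_group 3\<^esub> (k, l))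
       = (a [^] i \<otimes> b [^] j) \<otimes> (a [^] k \<otimes> b [^] l)"
proof -
  have ij: "i < 4" "j < 2" and kl: "k < 4" "l < 2" using u v by (auto simp: quaternion_group_3_carrier)
  have ba: "b \<otimes> a = a [^] (3::nat) \<otimes> b"
    using conj[symmetric] a b by (simp add: m_assoc)
  have bak: "b \<otimes> a [^] n = a [^] (3 * n) \<otimes> b" for n :: nat
  proof (induction n)
    case (Suc n)
    have "b \<otimes> a [^] Suc n = a [^] (3 * n) \<otimes> (b \<otimes> a)" using Suc a b by (simp add: m_assoc[symmetric])
    also have "\<dots> = a [^] (3 * Suc n) \<otimes> b" using ba a b by (simp add: m_assoc[symmetric] nat_pow_mult add.commute)
    finally show ?case .
  qed (use b in simp)
  have amod: "a [^] n = a [^] (n mod 4)" for n :: nat using nat_pow_mod_ord[OF a, of n] oa by simp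
  consider "j = 0" | "j = 1" "l = 0" | "j = 1" "l = 1" using ij kl by linarith
  then show ?thesis
  proof cases
    case 1
    then show ?thesis
      using a b amod[of "i + k"] by (simp add: quaternion_group_3_mult m_assoc nat_pow_mult_assoc)
  next
    case 2
    have "(a [^] i \<otimes> b) \<otimes> a [^] k = a [^] (i + 3 * k) \<otimes> b"
      using bak[of k] a b by (simp add: m_assoc nat_pow_mult_assoc)
    also have "a [^] (i + 3 * k) = a [^] (i + 4 - k)"
      using amod[of "i + 3 * k"] amod[of "i + 4 - k"] mod_4_minus[OF kl(1)] by simp
    finally show ?thesis using 2 a b amod[of "i + 4 - k"] by (simp add: quaternion_group_3_mult)
  next
    case 3
    have bb: "b \<otimes> b = a [^] (2::nat)" using b2 b by (simp add: numeral_2_eq_2)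
    have "(a [^] i \<otimes> b) \<otimes> (a [^] k \<otimes> b) = a [^] i \<otimes> (b \<otimes> a [^] k) \<otimes> b"
      using a b by (simp add: m_assoc)
    also have "\<dots> = a [^] (i + 3 * k) \<otimes> (b \<otimes> b)"
      using bak[of k] a b by (simp add: m_assoc nat_pow_mult_assoc)
    also have "\<dots> = a [^] (i + 3 * k + 2)" unfolding bb using a by (simp add: nat_pow_mult)
    also have "\<dots> = a [^] (i + 4 - k + 2)"
    proof -
      have "i + 2 + 3 * k = i + 3 * k + 2" "i + 2 + 4 - k = i + 4 - k + 2" using kl(1) by simp_all
      then have "(i + 3 * k + 2) mod 4 = (i + 4 - k + 2) mod 4" using mod_4_minus[OF kl(1), of "i + 2"] by simp
      then show ?thesis using amod[of "i + 3 * k + 2"] amod[of "i + 4 - k + 2"] by simp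
    qed
    finally show ?thesis using 3 a b amod[of "i + 4 - k + 2"] by (simp add: quaternion_group_3_mult)
  qed
qed

lemma quaternion_word_inj:
  assumes a: "a \<in> carrier G" and b: "b \<in> carrier G" and oa: "ord a = 4" and b_notin: "b \<notin> generate G {a}"
  shows "inj_on (\<lambda>(i, j). a [^] i \<otimes> b [^] j) (carrier (quaternion_group 3))"
proof (rule inj_onI)
  fix u v assume u: "u \<in> carrier (quaternion_group 3)" and v: "v \<in> carrier (quaternion_group 3)"
    and uv: "(\<lambda>(i, j). a [^] i \<otimes> b [^] j) u = (\<lambda>(i, j). a [^] i \<otimes> b [^] j) v"
  obtain i j k l where u': "u = (i, j)" and v': "v = (k, l)" by fastforce
  have ij: "i < 4" "j < 2" and kl: "k < 4" "l < 2" using u v u' v' by (auto simp: quaternion_group_3_carrier)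
  have e: "a [^] i \<otimes> b [^] j = a [^] k \<otimes> b [^] l" using uv u' v' by simp
  have jl: "j = l"
  proof (rule ccontr)
    assume "j \<noteq> l"
    then have "b = inv (a [^] k) \<otimes> a [^] i \<or> b = inv (a [^] i) \<otimes> a [^] k"
      using e ij kl a b by (auto simp: less_2_cases_iff inv_solve_left)
    moreover have "inv (a [^] n) \<otimes> a [^] n' \<in> generate G {a}" for n n' :: nat
      using a nat_pow_mem_generate generate_m_inv_closed[of "{a}"] by (auto intro: generate.eng)
    ultimately show False using b_notin by auto
  qed
  then have "a [^] i = a [^] k" using e a b by simp
  then have "i = k" using ord_inj[OF a] ij kl oa unfolding inj_on_def by auto
  then show "u = v" using jl u' v' by simp
qed

lemma has_gen_quaternion_subgroupI:
  assumes fin: "finite (carrier G)" and a: "a \<in> carrier G" and b: "b \<in> carrier G" and oa: "ord a = 4"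
    and conj: "b \<otimes> a \<otimes> inv b = a [^] (3::nat)" and b2: "b [^] (2::nat) = a [^] (2::nat)"
    and b_notin: "b \<notin> generate G {a}"
  shows "has_gen_quaternion_subgroup G"
proof -
  let ?f = "\<lambda>(i::nat, j::nat). a [^] i \<otimes> b [^] j" and ?Q = "quaternion_group 3"
  have "\<one> = ?f (0, 0)" using a b by simp
  moreover have "(0, 0) \<in> carrier ?Q" by (simp add: quaternion_group_3_carrier)
  ultimately have one: "\<one> \<in> ?f ` carrier ?Q" by (rule image_eqI)
  have closed: "u \<otimes>\<^bsub>?Q\<^esub> v \<in> carrier ?Q" if "u \<in> carrier ?Q" "v \<in> carrier ?Q" for u v
    using that by (auto simp: quaternion_group_3_carrier quaternion_group_3_mult)
  have mult: "?f (u \<otimes>\<^bsub>?Q\<^esub> v) = ?f u \<otimes> ?f v" if "u \<in> carrier ?Q" "v \<in> carrier ?Q" for u v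
    using quaternion_word_mult[OF a b oa conj b2] that by (cases u, cases v) simp
  have "?f ` carrier ?Q \<subseteq> carrier G" using a b by auto
  from image_subgroup_iso[OF fin this quaternion_word_inj[OF a b oa b_notin] one closed mult]
  show ?thesis unfolding has_gen_quaternion_subgroup_def by (intro exI[of _ "?f ` carrier ?Q"] exI[of _ 3]) simp
qed

end

context finite_p_group begin

lemma exists_normalizing_root_outside:
  assumes K: "subgroup K G" and a: "a \<in> carrier G" and aK: "generate G {a} \<subset> K"
  obtains b where "b \<in> K" "b \<notin> generate G {a}" "b \<otimes> a \<otimes> inv b \<in> generate G {a}"
    "b [^] p \<in> generate G {a}"
proof -
  define M where "M = generate G {a}"
  have M: "subgroup M G" "M \<subseteq> carrier G" "a \<in> M"
    unfolding M_def using a generate_incl by (auto intro: generate_is_subgroup generate.incl)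
  obtain y where y: "y \<in> K" "y \<notin> M" and ynorm: "\<forall>m \<in> M. y \<otimes> m \<otimes> inv y \<in> M"
    using exists_normalizing_element_outside[OF K M(1)] aK unfolding M_def by blast
  have yc: "y \<in> carrier G" using y(1) subgroup.subset[OF K] by blast
  obtain t where t: "y [^] (p ^ t) \<notin> M" "(y [^] (p ^ t)) [^] p \<in> M"
    using exists_pow_outside_with_pow_inside[OF M(1) yc y(2)] by blast
  moreover have "y [^] (p ^ t) \<in> K" using K y(1) by (rule subgroup_nat_pow_closed)
  moreover have "y [^] (p ^ t) \<otimes> a \<otimes> inv (y [^] (p ^ t)) \<in> M"
    using nat_pow_conj_closed[OF M(2) yc] ynorm M(3) by blast
  ultimately show ?thesis using that unfolding M_def by blast
qed

lemma quaternion_pair_of_minimal_noncyclic: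
  assumes K: "subgroup K G" and ncyc: "\<not> (\<exists>c \<in> carrier G. K = generate G {c})"
    and minimal: "\<And>L. subgroup L G \<Longrightarrow> L \<subset> K \<Longrightarrow> \<exists>c \<in> carrier G. L = generate G {c}"
    and z: "z \<in> carrier G" "ord z = p" and uniq: "\<And>w. w \<in> K \<Longrightarrow> w [^] p = \<one> \<Longrightarrow> w \<in> generate G {z}"
  obtains a b where "a \<in> K" "b \<in> K" "ord a = 4" "b \<otimes> a \<otimes> inv b = a [^] (3::nat)"
    "b [^] (2::nat) = a [^] (2::nat)" "b \<notin> generate G {a}"
proof -
  interpret K: subgroup K G by (rule K)
  obtain a where a: "a \<in> K" and amax: "\<And>y. y \<in> K \<Longrightarrow> ord y \<le> ord a"
    using finite_subset[OF K.subset finite_carrier] K.one_closed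
    by (metis (no_types, lifting) Max_ge Max_in empty_iff finite_imageI image_iff)
  have ac: "a \<in> carrier G" using a K.subset by blast
  define M where "M = generate G {a}"
  have "M \<subseteq> K" unfolding M_def using a by (intro generate_subgroup_incl[OF _ K]) simp
  moreover have "M \<noteq> K" using ncyc ac unfolding M_def by blast
  ultimately have MK: "M \<subset> K" by blast
  obtain n where oa: "ord a = p ^ n" using ord_prime_power[OF ac] by blast
  have a1: "a \<noteq> \<one>"
  proof
    assume "a = \<one>"
    then have "K = {\<one>}" using amax ord_eq_1 K.subset by (auto simp: le_Suc_eq ord_ne_zero)
    then show False using ncyc generate_one by auto
  qed
  then have n: "n \<ge> 1" using oa ord_eq_1[OF ac] by (cases n) auto
  obtain b where bK: "b \<in> K" and b_notin: "b \<notin> M" and norm: "b \<otimes> a \<otimes> inv b \<in> M" and "b [^] p \<in> M"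
    using exists_normalizing_root_outside[OF K ac MK[unfolded M_def]] unfolding M_def by blast
  then obtain s where bp: "b [^] p = a [^] (p * s)" and s: "s < p ^ (n - 1)"
    using pow_prime_in_cyclic_of_max_order[OF K a amax oa] unfolding M_def by blast
  have bc: "b \<in> carrier G" using bK K.subset by blast
  have comm: "a [^] p \<otimes> b = b \<otimes> a [^] p"
    using pow_prime_commute_in_minimal_noncyclic[OF K minimal a oa n _ bK _ bp] MK norm unfolding M_def by blast
  have "z \<in> M" unfolding M_def
    using unique_ord_prime_mem_generate[OF ac a1 z] uniq generate_subgroup_incl[OF _ K] a by blast
  then have zM: "generate G {z} \<subseteq> M" unfolding M_def using ac by (intro generate_subgroup_incl generate_is_subgroup) auto
  have no_root: "(a [^] k \<otimes> b) [^] p \<noteq> \<one>" for k :: nat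
  proof
    assume "(a [^] k \<otimes> b) [^] p = \<one>"
    then have "a [^] k \<otimes> b \<in> M" using uniq zM subgroup_nat_pow_closed[OF K a] bK by blast
    moreover have "a [^] k \<in> M" unfolding M_def using nat_pow_mem_generate[OF ac] .
    ultimately have "inv (a [^] k) \<otimes> (a [^] k \<otimes> b) \<in> M"
      unfolding M_def using generate_m_inv_closed[of "{a}"] ac by (auto intro: generate.eng)
    then show False using b_notin ac bc by simp
  qed
  have "p = 2 \<and> n = 2 \<and> b \<otimes> a \<otimes> inv b = a [^] (3::nat) \<and> b [^] (2::nat) = a [^] (2::nat)"
    using quaternion_relations[OF prime_p ac bc oa n bp s comm _ no_root] norm unfolding M_def by blast
  then show ?thesis using that[OF a bK] oa b_notin unfolding M_def by simp
qed

lemma exists_minimal_noncyclic_subgroup: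
  assumes H: "subgroup H G" and ncyc: "\<not> (\<exists>c \<in> carrier G. H = generate G {c})"
  obtains K where "subgroup K G" "K \<subseteq> H" "\<not> (\<exists>c \<in> carrier G. K = generate G {c})"
    "\<And>L. subgroup L G \<Longrightarrow> L \<subset> K \<Longrightarrow> \<exists>c \<in> carrier G. L = generate G {c}"
proof -
  define P where "P K \<longleftrightarrow> subgroup K G \<and> K \<subseteq> H \<and> \<not> (\<exists>c \<in> carrier G. K = generate G {c})" for K
  obtain K where PK: "P K" and least: "\<And>L. P L \<Longrightarrow> card K \<le> card L"
    using ex_has_least_nat[of P H card] H ncyc unfolding P_def by blast
  have "\<exists>c \<in> carrier G. L = generate G {c}" if L: "subgroup L G" "L \<subset> K" for L
  proof (rule ccontr)
    assume "\<not> ?thesis"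
    then have "card K \<le> card L" using least L PK unfolding P_def by blast
    moreover have "card L < card K"
      using L(2) finite_subset[OF subgroup.subset finite_carrier] PK unfolding P_def by (blast intro: psubset_card_mono)
    ultimately show False by simp
  qed
  then show ?thesis using that PK unfolding P_def by blast
qed

lemma has_gen_quaternion_subgroup_of_unique_ord_prime:
  assumes H: "subgroup H G" and ncyc: "\<not> (\<exists>c \<in> carrier G. H = generate G {c})"
    and z: "z \<in> carrier G" "ord z = p" and uniq: "\<And>w. w \<in> H \<Longrightarrow> w [^] p = \<one> \<Longrightarrow> w \<in> generate G {z}"
  shows "has_gen_quaternion_subgroup G"
proof -
  obtain K where K: "subgroup K G" "K \<subseteq> H" "\<not> (\<exists>c \<in> carrier G. K = generate G {c})"
    and minimal: "\<And>L. subgroup L G \<Longrightarrow> L \<subset> K \<Longrightarrow> \<exists>c \<in> carrier G. L = generate G {c}"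
    using exists_minimal_noncyclic_subgroup[OF H ncyc] by blast
  obtain a b where "a \<in> K" "b \<in> K" "ord a = 4" "b \<otimes> a \<otimes> inv b = a [^] (3::nat)"
    "b [^] (2::nat) = a [^] (2::nat)" "b \<notin> generate G {a}"
    using quaternion_pair_of_minimal_noncyclic[OF K(1,3) minimal z] uniq K(2) by blast
  then show ?thesis
    using has_gen_quaternion_subgroupI[OF finite_carrier] subgroup.subset[OF K(1)] by blast
qed

lemma exists_central_ord_prime_not_in_cyclic_derived:
  assumes no_quaternion: "\<not> has_gen_quaternion_subgroup G"
    and ncyc: "\<not> cyclic_group (subgroup_generated G (derived G (carrier G)))"
  shows "\<exists>x \<in> center_of G. ord x = p \<and> (\<exists>y \<in> derived G (carrier G). y \<noteq> \<one> \<and> x \<notin> generate G {y})"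
proof -
  let ?D = "derived G (carrier G)"
  have D: "subgroup ?D G" by (simp add: derived_is_subgroup)
  have ncD: "\<not> (\<exists>c \<in> carrier G. ?D = generate G {c})"
    using ncyc cyclic_group_subgroup_generated_iff[OF subgroup.subset[OF D]]
      generate_subgroup_incl[OF _ D] generate.incl[of _ ?D G] by blast
  then have "?D \<noteq> {\<one>}" using generate_one by auto
  then obtain x where x: "x \<in> ?D" "x \<in> center_of G" "ord x = p"
    using normal_subgroup_meets_center[OF derived_self_is_normal] by blast
  have xc: "x \<in> carrier G" using x(2) center_of_closed by blast
  show ?thesis
  proof (rule ccontr)
    assume no_witness: "\<not> ?thesis"
    have "w \<in> generate G {x}" if "w \<in> ?D" "w [^] p = \<one>" for w
    proof (cases "w = \<one>")
      case False
      have wc: "w \<in> carrier G" using that(1) subgroup.subset[OF D] by blast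
      have "x \<in> generate G {w}" using no_witness x that(1) False by blast
      then show ?thesis
        using ord_prime_mem_generate[OF wc _ prime_p generate.incl _ ord_eq_prime[OF prime_p wc that(2) False], of 1]
          ord_eq_prime[OF prime_p wc that(2) False] x(3) xc p_gt_1 ord_eq_1[OF xc] by auto
    qed (simp add: generate.one)
    then show False using has_gen_quaternion_subgroup_of_unique_ord_prime[OF D ncD xc x(3)] no_quaternion by blast
  qed
qed

lemma exists_central_ord_prime_not_in_cyclic:
  assumes no_quaternion: "\<not> has_gen_quaternion_subgroup G" and ncyc: "\<not> cyclic_group G"
    and g: "g \<in> carrier G" "g \<noteq> \<one>" and trivial_meet: "generate G {g} \<inter> derived G (carrier G) = {\<one>}"
  shows "\<exists>x \<in> center_of G. ord x = p \<and> x \<notin> generate G {g}"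
proof (cases "derived G (carrier G) = {\<one>}")
  case False
  then obtain x where x: "x \<in> derived G (carrier G)" "x \<in> center_of G" "ord x = p"
    using normal_subgroup_meets_center[OF derived_self_is_normal] by blast
  then have "x \<noteq> \<one>" using p_gt_1 by auto
  then show ?thesis using x trivial_meet by blast
next
  case True
  show ?thesis
  proof (rule ccontr)
    assume "\<not> ?thesis"
    then have in_g: "w \<in> generate G {g}" if "w \<in> carrier G" "w [^] p = \<one>" "w \<noteq> \<one>" for w
      using center_of_if_derived_trivial[OF True] ord_eq_prime[OF prime_p] that by blast
    obtain k where z: "ord (g [^] (k::nat)) = p" using exists_nat_pow_ord_eq_prime[OF g] by blast
    have zc: "g [^] k \<in> carrier G" using g(1) by simp
    have "z \<in> generate G {g [^] k}" if "z \<in> carrier G" "z [^] p = \<one>" for z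
    proof (cases "z = \<one>")
      case False
      obtain m where "ord g = p ^ m" using ord_prime_power[OF g(1)] by blast
      then show ?thesis
        using ord_prime_mem_generate[OF g(1) _ prime_p in_g[OF that False] nat_pow_mem_generate[OF g(1)]]
          ord_eq_prime[OF prime_p that False] z p_gt_1 ord_eq_1[OF zc] by auto
    qed (simp add: generate.one)
    moreover have "\<not> (\<exists>c \<in> carrier G. carrier G = generate G {c})" using ncyc cyclic_group_iff_generate by blast
    ultimately show False
      using has_gen_quaternion_subgroup_of_unique_ord_prime[OF subgroup_self _ zc z] no_quaternion by blast
  qed
qed

lemma exists_central_noncyclic_pair:
  assumes ncyc: "\<not> cyclic_group G" and no_quaternion: "\<not> has_gen_quaternion_subgroup G"
    and "\<not> cyclic_group (subgroup_generated G (derived G (carrier G)))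
         \<or> (\<exists>g \<in> carrier G. ord g > p \<and> generate G {g} \<inter> derived G (carrier G) = {\<one>})"
  obtains x y where "x \<in> center_of G" "ord x = p" "y \<in> carrier G" "y \<noteq> \<one>" "x \<notin> generate G {y}"
    "y \<in> derived G (carrier G) \<or> (\<exists>g \<in> carrier G. y = g [^] p)"
  using assms(3)
proof
  assume "\<not> cyclic_group (subgroup_generated G (derived G (carrier G)))"
  then obtain x y where "x \<in> center_of G" "ord x = p" "y \<in> derived G (carrier G)"
    "y \<noteq> \<one>" "x \<notin> generate G {y}"
    using exists_central_ord_prime_not_in_cyclic_derived[OF no_quaternion] by blast
  moreover have "y \<in> carrier G" using \<open>y \<in> derived G (carrier G)\<close> derived_in_carrier by blast
  ultimately show thesis using that by blast
next
  assume "\<exists>g \<in> carrier G. p < ord g \<and> generate G {g} \<inter> derived G (carrier G) = {\<one>}"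
  then obtain g where g: "g \<in> carrier G" "p < ord g" "generate G {g} \<inter> derived G (carrier G) = {\<one>}"
    by blast
  have gp: "g [^] p \<noteq> \<one>" using g pow_eq_id p_gt_1 by (auto dest: dvd_imp_le)
  then have "g \<noteq> \<one>" by auto
  then obtain x where x: "x \<in> center_of G" "ord x = p" "x \<notin> generate G {g}"
    using exists_central_ord_prime_not_in_cyclic[OF no_quaternion ncyc g(1) _ g(3)] by blast
  have "generate G {g [^] p} \<subseteq> generate G {g}"
    using g(1) nat_pow_mem_generate by (intro generate_subgroup_incl generate_is_subgroup) auto
  then have "x \<notin> generate G {g [^] p}" using x(3) by blast
  then show thesis using that[OF x(1,2) _ gp] g(1) by blast
qed

end

section \<open>Central extensions and the two edge sets\<close>

lemma (in group_hom) derived_subset_kernel: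
  assumes comm: "\<And>a b. a \<in> carrier G \<Longrightarrow> b \<in> carrier G \<Longrightarrow> h a \<otimes>\<^bsub>H\<^esub> h b = h b \<otimes>\<^bsub>H\<^esub> h a"
  shows "derived G (carrier G) \<subseteq> kernel G H h"
  unfolding derived_def
proof (rule G.generate_subgroup_incl[OF _ subgroup_kernel], safe)
  fix a b assume ab: "a \<in> carrier G" "b \<in> carrier G"
  have "h (a \<otimes> b \<otimes> inv a \<otimes> inv b) = h b \<otimes>\<^bsub>H\<^esub> h a \<otimes>\<^bsub>H\<^esub> inv\<^bsub>H\<^esub> h a \<otimes>\<^bsub>H\<^esub> inv\<^bsub>H\<^esub> h b"
    using ab comm[OF ab] by simp
  then show "a \<otimes> b \<otimes> inv a \<otimes> inv b \<in> kernel G H h"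
    using ab by (simp add: kernel_def H.m_assoc)
qed

lemma (in group_hom) hom_commutator:
  "x \<in> carrier G \<Longrightarrow> y \<in> carrier G \<Longrightarrow> h (G.commutator x y) = H.commutator (h x) (h y)"
  by (simp add: G.commutator_def H.commutator_def)

locale central_extension = group_hom G H h for G (structure) and H (structure) and h +
  assumes surj: "h ` carrier G = carrier H"
    and kernel_central: "kernel G H h \<subseteq> center_of G"

lemma central_extension_of_schur_cover: "schur_cover Gt G \<pi> \<Longrightarrow> central_extension Gt G \<pi>"
  unfolding schur_cover_def stem_extension_def epi_def
  by (auto intro!: central_extension.intro group_hom.intro simp: central_extension_axioms_def group_hom_axioms_def)

context central_extension begin

definition lifts_commute :: "_ \<Rightarrow> _ \<Rightarrow> bool" where
  "lifts_commute x y \<longleftrightarrow> (\<forall>u \<in> carrier G. \<forall>v \<in> carrier G. h u = x \<longrightarrow> h v = y \<longrightarrow> u \<otimes> v = v \<otimes> u)"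

lemma deep_commuting_edges_eq:
  "deep_commuting_edges G H h =
    {{x, y} | x y. x \<in> carrier H \<and> y \<in> carrier H \<and> x \<noteq> y \<and> lifts_commute x y}"
  unfolding deep_commuting_edges_def lifts_commute_def by simp

lemma lift_eq_central_mult:
  assumes "v \<in> carrier G" "w \<in> carrier G" "h v = h w"
  shows "\<exists>k \<in> center_of G. v = k \<otimes> w"
proof -
  have "v \<otimes> inv w \<in> kernel G H h" using assms by (simp add: kernel_def)
  moreover have "v = (v \<otimes> inv w) \<otimes> w" using assms by (simp add: G.m_assoc)
  ultimately show ?thesis using kernel_central by blast
qed

text \<open>Lifts are unique up to central factors, so one commuting lift of \<open>y\<close> per lift of \<open>x\<close> suffices.\<close>

lemma lifts_commuteI:
  assumes "\<And>u. u \<in> carrier G \<Longrightarrow> h u = x \<Longrightarrow> \<exists>w \<in> carrier G. h w = y \<and> u \<otimes> w = w \<otimes> u"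
  shows "lifts_commute x y"
  unfolding lifts_commute_def
proof (intro ballI impI)
  fix u v assume u: "u \<in> carrier G" "h u = x" and v: "v \<in> carrier G" "h v = y"
  obtain w where w: "w \<in> carrier G" "h w = y" "u \<otimes> w = w \<otimes> u" using assms u by blast
  obtain k where k: "k \<in> center_of G" "v = k \<otimes> w" using lift_eq_central_mult[OF v(1) w(1)] v w by auto
  have kc: "k \<in> carrier G" and ku: "k \<otimes> u = u \<otimes> k" using k(1) u(1) G.center_of_closed G.center_ofD by auto
  have "u \<otimes> (k \<otimes> w) = k \<otimes> (u \<otimes> w)" using u(1) kc w(1) ku by (simp add: G.m_assoc[symmetric])
  also have "\<dots> = k \<otimes> w \<otimes> u" using u(1) kc w by (simp add: G.m_assoc)
  finally show "u \<otimes> v = v \<otimes> u" using k(2) by simp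
qed

lemma lifts_commute_of_cyclic:
  assumes x: "x \<in> carrier H" and y: "y \<in> carrier H" and cyc: "cyclic_group (subgroup_generated H {x, y})"
  shows "lifts_commute x y"
proof (rule lifts_commuteI)
  fix u assume u: "u \<in> carrier G" "h u = x"
  obtain c where c: "c \<in> carrier H" "generate H {x, y} = generate H {c}"
    using H.cyclic_group_subgroup_generated_iff[of "{x, y}"] x y cyc by auto
  then have "x \<in> generate H {c}" "y \<in> generate H {c}" using generate.incl[of _ "{x, y}" H] by auto
  then obtain i j :: int where ij: "x = c [^]\<^bsub>H\<^esub> i" "y = c [^]\<^bsub>H\<^esub> j"
    using H.generate_pow[OF c(1)] by auto
  obtain d where d: "d \<in> carrier G" "h d = c" using c(1) surj by (metis imageE)
  obtain k where k: "k \<in> center_of G" "u = k \<otimes> d [^] i"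
    using lift_eq_central_mult[OF u(1), of "d [^] i"] u(2) d ij by (auto simp: hom_int_pow)
  have kc: "k \<in> carrier G" using G.center_of_closed[OF k(1)] .
  have kd: "k \<otimes> d [^] j = d [^] j \<otimes> k" using G.center_ofD[OF k(1)] d(1) by simp
  have dd: "d [^] i \<otimes> d [^] j = d [^] j \<otimes> d [^] i" using d(1) by (metis add.commute G.int_pow_mult)
  have "u \<otimes> d [^] j = k \<otimes> (d [^] i \<otimes> d [^] j)" using k(2) kc d(1) by (simp add: G.m_assoc)
  also have "\<dots> = (k \<otimes> d [^] j) \<otimes> d [^] i" unfolding dd using kc d(1) by (simp add: G.m_assoc)
  also have "\<dots> = d [^] j \<otimes> u" unfolding kd k(2) using kc d(1) by (simp add: G.m_assoc)
  finally have "u \<otimes> d [^] j = d [^] j \<otimes> u" .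
  moreover have "h (d [^] j) = y" using d ij by (simp add: hom_int_pow)
  ultimately show "\<exists>w \<in> carrier G. h w = y \<and> u \<otimes> w = w \<otimes> u" using d(1) by blast
qed


lemma commutator_lift_central:
  assumes u: "u \<in> carrier G" "h u \<in> center_of H" and w: "w \<in> carrier G"
  shows "G.commutator u w \<in> center_of G"
proof -
  have "h (G.commutator u w) = \<one>\<^bsub>H\<^esub>"
    using u w by (simp add: hom_commutator H.commutator_central_left)
  then show ?thesis using u(1) w kernel_central by (auto simp: kernel_def)
qed

lemma group_hom_commutator_lift:
  assumes u: "u \<in> carrier G" "h u \<in> center_of H"
  shows "group_hom G G (G.commutator u)"
proof (unfold_locales, rule homI)
  fix a b assume a: "a \<in> carrier G" and b: "b \<in> carrier G"
  let ?c = "G.commutator u"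
  have ca: "?c a \<in> carrier G" and cb: "?c b \<in> carrier G" using u(1) a b by simp_all
  have conj: "u \<otimes> v \<otimes> inv u = ?c v \<otimes> v" if "v \<in> carrier G" for v
    using G.conj_eq_commutator_mult[OF u(1) that] .
  have "?c (a \<otimes> b) = (u \<otimes> a \<otimes> inv u) \<otimes> (u \<otimes> b \<otimes> inv u) \<otimes> inv b \<otimes> inv a"
    using u(1) a b by (simp add: G.commutator_def G.m_assoc G.inv_mult_group)
  also have "\<dots> = ?c a \<otimes> (a \<otimes> ?c b) \<otimes> inv a"
    unfolding conj[OF a] conj[OF b] using a b ca cb by (simp add: G.m_assoc)
  also have "a \<otimes> ?c b = ?c b \<otimes> a"
    using G.center_ofD[OF commutator_lift_central[OF u b] a] by simp
  finally show "?c (a \<otimes> b) = ?c a \<otimes> ?c b"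
    using a ca cb by (simp add: G.m_assoc)
qed (use u in simp)

lemma commutator_nat_pow_left:
  assumes u: "u \<in> carrier G" "h u \<in> center_of H" and w: "w \<in> carrier G"
  shows "G.commutator (u [^] n) w = G.commutator u w [^] (n::nat)"
proof (induction n)
  case (Suc n)
  let ?c = "G.commutator u w"
  have c: "?c \<in> carrier G" using u(1) w by simp
  have "G.commutator (u [^] Suc n) w = u [^] n \<otimes> (u \<otimes> w \<otimes> inv u) \<otimes> inv (u [^] n) \<otimes> inv w"
    using u(1) w by (simp add: G.commutator_def G.m_assoc G.inv_mult_group G.nat_pow_Suc2)
  also have "\<dots> = (u [^] n \<otimes> ?c) \<otimes> w \<otimes> inv (u [^] n) \<otimes> inv w"
    unfolding G.conj_eq_commutator_mult[OF u(1) w] using u(1) w c by (simp add: G.m_assoc)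
  also have "u [^] n \<otimes> ?c = ?c \<otimes> u [^] n"
    using G.center_ofD[OF commutator_lift_central[OF u w]] u(1) by simp
  also have "?c \<otimes> u [^] n \<otimes> w \<otimes> inv (u [^] n) \<otimes> inv w = ?c \<otimes> G.commutator (u [^] n) w"
    using u(1) w c by (simp add: G.commutator_def G.m_assoc)
  also have "\<dots> = ?c [^] Suc n" by (simp only: Suc.IH G.nat_pow_Suc2[OF c])
  finally show ?case .
qed (use u(1) w in \<open>simp add: G.commutator_def\<close>)

lemma lifts_commute_of_derived:
  assumes x: "x \<in> center_of H" and y: "y \<in> derived H (carrier H)"
  shows "lifts_commute x y"
proof (rule lifts_commuteI)
  fix u assume u: "u \<in> carrier G" "h u = x"
  interpret c: group_hom G G "G.commutator u"
    using group_hom_commutator_lift u x by simp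
  have "derived G (carrier G) \<subseteq> kernel G G (G.commutator u)"
  proof (rule c.derived_subset_kernel)
    fix a b assume a: "a \<in> carrier G" and b: "b \<in> carrier G"
    have "h u \<in> center_of H" using u x by simp
    then show "G.commutator u a \<otimes> G.commutator u b = G.commutator u b \<otimes> G.commutator u a"
      using G.center_ofD[OF commutator_lift_central[OF u(1) _ a]] u(1) b by simp
  qed
  moreover obtain w where w: "w \<in> derived G (carrier G)" "h w = y"
    using y derived_img[of "carrier G"] surj by auto
  ultimately have "w \<in> carrier G" "G.commutator u w = \<one>" by (auto simp: kernel_def)
  then show "\<exists>w \<in> carrier G. h w = y \<and> u \<otimes> w = w \<otimes> u"
    using u(1) w(2) G.commutator_eq_one_iff by blast
qed

lemma lifts_commute_of_nat_pow:
  assumes x: "x \<in> center_of H" "x [^]\<^bsub>H\<^esub> p = \<one>\<^bsub>H\<^esub>" and g: "g \<in> carrier H" and y: "y = g [^]\<^bsub>H\<^esub> (p::nat)"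
  shows "lifts_commute x y"
proof (rule lifts_commuteI)
  fix u assume u: "u \<in> carrier G" "h u = x"
  interpret c: group_hom G G "G.commutator u"
    using group_hom_commutator_lift u x by simp
  obtain w where w: "w \<in> carrier G" "h w = g" using g surj by (metis imageE)
  have "u [^] p \<in> center_of G" using u x kernel_central by (auto simp: kernel_def hom_nat_pow)
  then have "G.commutator u (w [^] p) = G.commutator (u [^] p) w"
    using w u x by (simp add: c.hom_nat_pow commutator_nat_pow_left)
  also have "\<dots> = \<one>"
    using G.commutator_central_left[OF _ w(1)] \<open>u [^] p \<in> center_of G\<close> by blast
  finally show "\<exists>w \<in> carrier G. h w = y \<and> u \<otimes> w = w \<otimes> u"
    using u(1) w y by (intro bexI[of _ "w [^] p"]) (auto simp: G.commutator_eq_one_iff hom_nat_pow)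
qed

lemma enhanced_power_edges_subset_deep_commuting_edges:
  "enhanced_power_edges H \<subseteq> deep_commuting_edges G H h"
  unfolding enhanced_power_edges_def deep_commuting_edges_eq using lifts_commute_of_cyclic by blast

lemma deep_commuting_edge_not_enhanced_power:
  assumes "finite_p_group H p"
    and x: "x \<in> center_of H" "H.ord x = p" and y: "y \<in> carrier H" "y \<noteq> \<one>\<^bsub>H\<^esub>"
    and x_notin: "x \<notin> generate H {y}"
    and y_special: "y \<in> derived H (carrier H) \<or> (\<exists>g \<in> carrier H. y = g [^]\<^bsub>H\<^esub> p)"
  shows "{x, y} \<in> deep_commuting_edges G H h - enhanced_power_edges H"
proof -
  interpret Hp: finite_p_group H p by fact
  have xc: "x \<in> carrier H" using x(1) H.center_of_closed by blast
  have "x \<noteq> y" using x_notin generate.incl[of y "{y}" H] by auto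
  moreover have "lifts_commute x y"
    using y_special lifts_commute_of_derived[OF x(1)] lifts_commute_of_nat_pow[OF x(1)] x(2) xc by auto
  moreover have "\<not> cyclic_group (subgroup_generated H {x', y'})" if "{x', y'} = {x, y}" for x' y'
    using Hp.not_cyclic_pair[OF xc x(2) y x_notin] that by simp
  ultimately show ?thesis
    unfolding deep_commuting_edges_eq enhanced_power_edges_def using xc y(1) by blast
qed

end

theorem proposition3p14:
  fixes G :: "('a, 'b) monoid_scheme" and p :: nat
    and Gt :: "('c, 'd) monoid_scheme" and \<pi> :: "'c \<Rightarrow> 'a"
  assumes "p_group p G"
    and "\<not> cyclic_group G"
    and "\<not> has_gen_quaternion_subgroup G"
    and "\<not> cyclic_group (subgroup_generated G (derived G (carrier G)))
         \<or> (\<exists>g \<in> carrier G. group.ord G g > p \<and>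
              generate G {g} \<inter> derived G (carrier G) = {\<one>\<^bsub>G\<^esub>})"
    and "schur_cover Gt G \<pi>"
  shows "enhanced_power_edges G \<subset> deep_commuting_edges Gt G \<pi>"
proof -
  interpret P: finite_p_group G p using finite_p_group_of_p_group[OF assms(1)] .
  interpret E: central_extension Gt G \<pi> using central_extension_of_schur_cover[OF assms(5)] .
  obtain x y where "x \<in> center_of G" "P.ord x = p" "y \<in> carrier G" "y \<noteq> \<one>\<^bsub>G\<^esub>" "x \<notin> generate G {y}"
    "y \<in> derived G (carrier G) \<or> (\<exists>g \<in> carrier G. y = g [^]\<^bsub>G\<^esub> p)"
    using P.exists_central_noncyclic_pair[OF assms(2,3,4)] by blast
  then have "{x, y} \<in> deep_commuting_edges Gt G \<pi> - enhanced_power_edges G"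
    by (rule E.deep_commuting_edge_not_enhanced_power[OF P.finite_p_group_axioms])
  then show ?thesis using E.enhanced_power_edges_subset_deep_commuting_edges by blast
qed

end
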